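(* Let $V,W$ be separable Banach spaces, $\alpha,\beta,\gamma\in(0,1)$ with $\alpha+\beta\gamma>1$, and $A\in C^\alpha_tC^{1+\beta}_{V,W,\mathrm{loc}}$. Then the map $F:C^\gamma_tV\to C^\alpha_tW$, $F(x)=\int_0^\cdot A(\mathrm{d} s,x_s)$, is Fréchet differentiable with \[ DF(x):y\mapsto\int_0^\cdot DA(\mathrm{d} s,x_s)y_s. \]
   Context: Fix $T>0$. For a path $f:[0,T]\to E$, $\|f\|_\gamma=\sup_t\|f_t\|_E+\sup_{s<t}\|f_t-f_s\|_E/|t-s|^\gamma$; $C^\gamma_tE$ is the Banach space of paths with finite norm. For $g:V\to W$ and $R>0$, $\|g\|_{\beta,R}=\sup_{x\ne y,\|x\|,\|y\|\le R}\|g(x)-g(y)\|_W/\|x-y\|_V^\beta+\sup_{\|x\|\le R}\|g(x)\|_W$. Fields $A:[0,T]\times V\to W$ satisfy $A(0,\cdot)=0$, $A_{s,t}(x)=A(t,x)-A(s,x)$; $A\in C^\alpha_tC^{1+\beta}_{V,W,\mathrm{loc}}$ means $A(t,\cdot)$ Fréchet differentiable for all $t$ and for all $R>0$, $\sup_{s<t}(\|A_{s,t}\|_{\beta,R}+\|DA_{s,t}\|_{\beta,R})/|t-s|^\alpha<\infty$ ($DA$ valued in $\mathcal L(V;W)$). Integrals are limits over partitions of $[0,t]$: $\int_0^tA(\mathrm{d} s,x_s)=\lim_{|\Pi|\to0}\sum_iA_{t_i,t_{i+1}}(x_{t_i})$ and $\int_0^tDA(\mathrm{d} s,x_s)y_s=\lim_{|\Pi|\to0}\sum_iDA_{t_i,t_{i+1}}(x_{t_i})(y_{t_i})$.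 *)

theory Defs
  imports "HOL-Analysis.Analysis"
begin

text \<open>Paths are functions real => E; only their values on [0,T] matter.\<close>

definition hoelder_sup :: "real \<Rightarrow> (real \<Rightarrow> 'a::real_normed_vector) \<Rightarrow> real set" where
  "hoelder_sup T f = (\<lambda>t. norm (f t)) ` {0..T}"

definition hoelder_quot :: "real \<Rightarrow> real \<Rightarrow> (real \<Rightarrow> 'a::real_normed_vector) \<Rightarrow> real set" where
  "hoelder_quot g T f =
     (\<lambda>(s,t). norm (f t - f s) / (t - s) powr g) ` {(s,t). 0 \<le> s \<and> s < t \<and> t \<le> T}"

definition hoelder_path :: "real \<Rightarrow> real \<Rightarrow> (real \<Rightarrow> 'a::real_normed_vector) \<Rightarrow> bool" where
  "hoelder_path g T f \<longleftrightarrow> bdd_above (hoelder_sup T f) \<and> bdd_above (hoelder_quot g T f)"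

definition hoelder_norm :: "real \<Rightarrow> real \<Rightarrow> (real \<Rightarrow> 'a::real_normed_vector) \<Rightarrow> real" where
  "hoelder_norm g T f = Sup (hoelder_sup T f) + Sup (hoelder_quot g T f)"

text \<open>A in C^alpha_t C^{1+beta}_{V,W,loc}, with DA the Frechet derivative in x
  (valued in bounded linear operators), written out: the local (beta,R)-norms of the
  increments A_{s,t} and DA_{s,t} are bounded by C_R |t-s|^alpha.\<close>
definition field_hoelder_loc ::
  "real \<Rightarrow> real \<Rightarrow> real \<Rightarrow> (real \<Rightarrow> 'v::real_normed_vector \<Rightarrow> 'w::real_normed_vector)
     \<Rightarrow> (real \<Rightarrow> 'v \<Rightarrow> ('v \<Rightarrow>\<^sub>L 'w)) \<Rightarrow> bool" where
  "field_hoelder_loc T a b A DA \<longleftrightarrow>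
     (\<forall>x. A 0 x = 0) \<and>
     (\<forall>t\<in>{0..T}. \<forall>x. (A t has_derivative blinfun_apply (DA t x)) (at x)) \<and>
     (\<forall>R>0. \<exists>C. \<forall>s t. 0 \<le> s \<and> s < t \<and> t \<le> T \<longrightarrow>
        (\<forall>x y. norm x \<le> R \<and> norm y \<le> R \<and> x \<noteq> y \<longrightarrow>
            norm ((A t x - A s x) - (A t y - A s y)) \<le> C * (t - s) powr a * norm (x - y) powr b
          \<and> norm ((DA t x - DA s x) - (DA t y - DA s y)) \<le> C * (t - s) powr a * norm (x - y) powr b)
      \<and> (\<forall>x. norm x \<le> R \<longrightarrow>
            norm (A t x - A s x) \<le> C * (t - s) powr a
          \<and> norm (DA t x - DA s x) \<le> C * (t - s) powr a))"

definition is_partition :: "real \<Rightarrow> real list \<Rightarrow> bool" where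
  "is_partition t P \<longleftrightarrow> P \<noteq> [] \<and> hd P = 0 \<and> last P = t \<and> sorted_wrt (<) P"

definition mesh :: "real list \<Rightarrow> real" where
  "mesh P = Max (insert 0 ((\<lambda>i. P ! Suc i - P ! i) ` {..<length P - 1}))"

definition psum :: "(real \<Rightarrow> real \<Rightarrow> 'w::real_normed_vector) \<Rightarrow> real list \<Rightarrow> 'w" where
  "psum g P = (\<Sum>i<length P - 1. g (P ! i) (P ! Suc i))"

definition has_psum_integral :: "(real \<Rightarrow> real \<Rightarrow> 'w::real_normed_vector) \<Rightarrow> real \<Rightarrow> 'w \<Rightarrow> bool" where
  "has_psum_integral g t I \<longleftrightarrow>
     (\<forall>e>0. \<exists>d>0. \<forall>P. is_partition t P \<and> mesh P < d \<longrightarrow> norm (psum g P - I) < e)"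

definition psum_integral :: "(real \<Rightarrow> real \<Rightarrow> 'w::real_normed_vector) \<Rightarrow> real \<Rightarrow> 'w" where
  "psum_integral g t = (THE I. has_psum_integral g t I)"

definition nl_int :: "(real \<Rightarrow> 'v \<Rightarrow> 'w::real_normed_vector) \<Rightarrow> (real \<Rightarrow> 'v) \<Rightarrow> real \<Rightarrow> 'w" where
  "nl_int A x t = psum_integral (\<lambda>u v. A v (x u) - A u (x u)) t"

definition lin_int :: "(real \<Rightarrow> 'v::real_normed_vector \<Rightarrow> ('v \<Rightarrow>\<^sub>L 'w::real_normed_vector)) \<Rightarrow> (real \<Rightarrow> 'v)
     \<Rightarrow> (real \<Rightarrow> 'v) \<Rightarrow> real \<Rightarrow> 'w" where
  "lin_int DA x y t = psum_integral (\<lambda>u v. blinfun_apply (DA v (x u) - DA u (x u)) (y u)) t"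

end

(*
  F(x) is obtained by sewing the germ A_{s,t}(x_s).  Its defect
  A_{s,t}(x_s) - A_{s,u}(x_s) - A_{u,t}(x_u) = A_{u,t}(x_s) - A_{u,t}(x_u) is of order
  |t-s|^(a+bg) with a + bg > 1, so the Riemann sums converge and the integral is a-Hoelder
  (sewing lemma).  The same applies to the germ DA_{s,t}(x_s) y_s, which is linear in y.

  The remainder F(x+y) - F(x) - DF(x) y is the sewing of the Taylor remainder
  A_{s,t}(x_s+y_s) - A_{s,t}(x_s) - DA_{s,t}(x_s) y_s, which is of size |t-s|^a |y|^(1+b).
  Interpolating this bound with the b-Hoelder continuity of DA in the base point bounds its
  defect by |t-s|^theta |y|^(1+rho) for some theta > 1 and rho > 0, so the remainder has
  Hoelder norm O(|y|^(1+rho)) = o(|y|).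
*)

theory Submission
  imports Defs
begin

section \<open>Partitions as finite sets of points\<close>

(* Partitions are handled as finite sets of points rather than sorted lists: splitting at a
   point and merging are then intersection and union. *)
definition next_point :: "real set \<Rightarrow> real \<Rightarrow> real" where
  "next_point S p = Min {q\<in>S. p < q}"

definition riemann_sum :: "(real \<Rightarrow> real \<Rightarrow> 'w::real_normed_vector) \<Rightarrow> real set \<Rightarrow> 'w" where
  "riemann_sum \<Xi> S = (\<Sum>p\<in>{p\<in>S. p < Max S}. \<Xi> p (next_point S p))"

definition is_point_partition :: "real set \<Rightarrow> real \<Rightarrow> real \<Rightarrow> bool" where
  "is_point_partition S s t \<longleftrightarrow> finite S \<and> S \<noteq> {} \<and> Min S = s \<and> Max S = t"

definition gaps_below :: "real set \<Rightarrow> real \<Rightarrow> bool" where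
  "gaps_below S d \<longleftrightarrow> (\<forall>p\<in>S. p < Max S \<longrightarrow> next_point S p - p < d)"

lemma next_point:
  assumes "finite S" "q \<in> S" "p < q"
  shows "next_point S p \<in> S" "p < next_point S p" "next_point S p \<le> q"
proof -
  have ne: "{q\<in>S. p < q} \<noteq> {}" "finite {q\<in>S. p < q}" using assms by auto
  have "next_point S p \<in> {q\<in>S. p < q}" unfolding next_point_def using Min_in[OF ne(2,1)] .
  then show "next_point S p \<in> S" "p < next_point S p" by auto
  show "next_point S p \<le> q" unfolding next_point_def using assms ne by (intro Min_le) auto
qed

lemma next_point_eqI:
  assumes "finite S" "q \<in> S" "p < q" "\<And>r. r \<in> S \<Longrightarrow> p < r \<Longrightarrow> q \<le> r"
  shows "next_point S p = q"
  unfolding next_point_def using assms by (intro Min_eqI) auto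

lemma next_point_Int_atMost:
  assumes "finite S" "u \<in> S" "p < u"
  shows "next_point (S \<inter> {..u}) p = next_point S p"
  using next_point[OF assms] assms(1) next_point(3)[OF assms(1)] by (intro next_point_eqI) auto

lemma next_point_Int_atLeast:
  assumes "finite S" "q \<in> S" "p < q" "u \<le> p"
  shows "next_point (S \<inter> {u..}) p = next_point S p"
  using next_point[OF assms(1-3)] assms(1,4) next_point(3)[OF assms(1)] by (intro next_point_eqI) auto

lemma is_point_partition_bounds:
  assumes "is_point_partition S s t"
  shows "S \<subseteq> {s..t}" "s \<in> S" "t \<in> S" "finite S"
  using assms Min_in Max_in unfolding is_point_partition_def by fastforce+

lemma is_point_partition_singleton: "is_point_partition S s s \<Longrightarrow> S = {s}"
  using is_point_partition_bounds[of S s s] by auto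

lemma is_point_partition_restrict:
  assumes "is_point_partition S s t" "u \<in> S"
  shows "is_point_partition (S \<inter> {..u}) s u" "is_point_partition (S \<inter> {u..}) u t"
  using assms is_point_partition_bounds[OF assms(1)] unfolding is_point_partition_def
  by (auto intro!: Min_eqI Max_eqI)

lemma card_Int_atMost_less:
  assumes "is_point_partition S s t" "u < t"
  shows "card (S \<inter> {..u}) < card S"
proof -
  note P = is_point_partition_bounds[OF assms(1)]
  have "t \<notin> S \<inter> {..u}" using assms(2) by simp
  then have "S \<inter> {..u} \<subset> S" using P(3) by blast
  then show ?thesis using P(4) by (rule psubset_card_mono[rotated])
qed

lemma card_Int_atLeast_less:
  assumes "is_point_partition S s t" "s < u"
  shows "card (S \<inter> {u..}) < card S"
proof -
  note P = is_point_partition_bounds[OF assms(1)]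
  have "s \<notin> S \<inter> {u..}" using assms(2) by simp
  then have "S \<inter> {u..} \<subset> S" using P(2) by blast
  then show ?thesis using P(4) by (rule psubset_card_mono[rotated])
qed

lemma riemann_sum_split:
  assumes "finite S" "u \<in> S"
  shows "riemann_sum \<Xi> S = riemann_sum \<Xi> (S \<inter> {..u}) + riemann_sum \<Xi> (S \<inter> {u..})"
proof -
  have top: "Max S \<in> S" "u \<le> Max S" using assms by (auto intro!: Max_in)
  have max_low: "Max (S \<inter> {..u}) = u" and max_high: "Max (S \<inter> {u..}) = Max S"
    using assms top by (auto intro!: Max_eqI)
  have parts: "{p\<in>S. p < Max S} = {p\<in>S \<inter> {..u}. p < u} \<union> {p\<in>S \<inter> {u..}. p < Max S}"
    using top by auto
  have "riemann_sum \<Xi> S = (\<Sum>p\<in>{p\<in>S \<inter> {..u}. p < u}. \<Xi> p (next_point S p))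
      + (\<Sum>p\<in>{p\<in>S \<inter> {u..}. p < Max S}. \<Xi> p (next_point S p))"
    unfolding riemann_sum_def parts using assms by (intro sum.union_disjoint) auto
  also have "(\<Sum>p\<in>{p\<in>S \<inter> {..u}. p < u}. \<Xi> p (next_point S p)) = riemann_sum \<Xi> (S \<inter> {..u})"
    unfolding riemann_sum_def max_low using next_point_Int_atMost[OF assms] by (intro sum.cong) auto
  also have "(\<Sum>p\<in>{p\<in>S \<inter> {u..}. p < Max S}. \<Xi> p (next_point S p)) = riemann_sum \<Xi> (S \<inter> {u..})"
    unfolding riemann_sum_def max_high using next_point_Int_atLeast[OF assms(1) top(1)] by (intro sum.cong) auto
  finally show ?thesis .
qed

lemma riemann_sum_singleton [simp]: "riemann_sum \<Xi> {s} = 0"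
proof -
  have "{p\<in>{s}. p < Max {s}} = {}" by auto
  then show ?thesis unfolding riemann_sum_def by (simp only: sum.empty)
qed

lemma riemann_sum_doubleton: "s < t \<Longrightarrow> riemann_sum \<Xi> {s, t} = \<Xi> s t"
proof -
  assume "s < t"
  then have "next_point {s, t} s = t" "{p\<in>{s, t}. p < Max {s, t}} = {s}"
    by (auto intro: next_point_eqI)
  then show ?thesis unfolding riemann_sum_def by simp
qed

lemma riemann_sum_mono:
  fixes \<Xi> \<Psi> :: "real \<Rightarrow> real \<Rightarrow> real"
  assumes "\<And>p. p \<in> S \<Longrightarrow> p < Max S \<Longrightarrow> \<Xi> p (next_point S p) \<le> \<Psi> p (next_point S p)"
  shows "riemann_sum \<Xi> S \<le> riemann_sum \<Psi> S"
  unfolding riemann_sum_def using assms by (intro sum_mono) auto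

lemma riemann_sum_cmult:
  fixes \<Xi> :: "real \<Rightarrow> real \<Rightarrow> real"
  shows "riemann_sum (\<lambda>p q. c * \<Xi> p q) S = c * riemann_sum \<Xi> S"
  unfolding riemann_sum_def by (rule sum_distrib_left[symmetric])

lemma is_point_partition_union:
  assumes "is_point_partition S1 s u" "is_point_partition S2 u t"
  shows "is_point_partition (S1 \<union> S2) s t" "(S1 \<union> S2) \<inter> {..u} = S1" "(S1 \<union> S2) \<inter> {u..} = S2"
proof -
  note P1 = is_point_partition_bounds[OF assms(1)] and P2 = is_point_partition_bounds[OF assms(2)]
  have fin: "finite (S1 \<union> S2)" using P1 P2 by auto
  have "s \<le> u" "u \<le> t" using P1 P2 by auto
  then have "Max (S1 \<union> S2) = t" "Min (S1 \<union> S2) = s" using P1 P2 fin by (auto intro!: Max_eqI Min_eqI)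
  then show "is_point_partition (S1 \<union> S2) s t" unfolding is_point_partition_def using fin P1(2) by blast
  show "(S1 \<union> S2) \<inter> {..u} = S1"
  proof
    show "(S1 \<union> S2) \<inter> {..u} \<subseteq> S1" using P1(1,3) P2(1) by fastforce
  qed (use P1(1) in auto)
  show "(S1 \<union> S2) \<inter> {u..} = S2"
  proof
    show "(S1 \<union> S2) \<inter> {u..} \<subseteq> S2" using P2(1,2) P1(1) by fastforce
  qed (use P2(1) in auto)
qed

lemma gaps_below_split:
  assumes "finite S" "u \<in> S" "gaps_below (S \<inter> {..u}) d" "gaps_below (S \<inter> {u..}) d"
  shows "gaps_below S d"
  unfolding gaps_below_def
proof (intro ballI impI)
  fix p assume p: "p \<in> S" "p < Max S"
  have top: "Max S \<in> S" "u \<le> Max S" using assms(1,2) by (auto intro: Max_in)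
  show "next_point S p - p < d"
  proof (cases "p < u")
    case True
    have "Max (S \<inter> {..u}) = u" using assms(1,2) by (intro Max_eqI) auto
    then show ?thesis
      using assms(3) p(1) True next_point_Int_atMost[OF assms(1,2) True] unfolding gaps_below_def by auto
  next
    case False
    have "Max (S \<inter> {u..}) = Max S" using assms(1) top by (intro Max_eqI) auto
    then show ?thesis
      using assms(4) p False next_point_Int_atLeast[OF assms(1) top(1) p(2)] unfolding gaps_below_def by auto
  qed
qed

section \<open>Riemann-sum integrals\<close>

lemma strict_sorted_nth_less_iff:
  fixes L :: "'a::linorder list"
  assumes "sorted_wrt (<) L" "i < length L" "j < length L"
  shows "L!i < L!j \<longleftrightarrow> i < j"
  using sorted_wrt_nth_less[OF assms(1), of i j] sorted_wrt_nth_less[OF assms(1), of j i] assms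
  by (metis less_asym linorder_neqE_nat less_irrefl)

lemma strict_sorted_Min_Max:
  fixes L :: "'a::linorder list"
  assumes "sorted_wrt (<) L" "L \<noteq> []"
  shows "Min (set L) = hd L" "Max (set L) = last L"
proof -
  have "L!0 \<le> L!j" "L!j \<le> L!(length L - 1)" if "j < length L" for j
    using that sorted_nth_mono[OF strict_sorted_imp_sorted[OF assms(1)]] by auto
  moreover have "hd L \<in> set L" "last L \<in> set L" using assms(2) by auto
  ultimately show "Min (set L) = hd L" "Max (set L) = last L"
    using assms(2) by (auto simp: hd_conv_nth last_conv_nth in_set_conv_nth intro!: Min_eqI Max_eqI)
qed

lemma next_point_strict_sorted:
  fixes L :: "real list"
  assumes "sorted_wrt (<) L" "Suc i < length L"
  shows "next_point (set L) (L!i) = L!Suc i"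
proof (rule next_point_eqI)
  show "finite (set L)" "L!Suc i \<in> set L" using assms(2) by simp_all
  show "L!i < L!Suc i" using strict_sorted_nth_less_iff[OF assms(1), of i "Suc i"] assms(2) by simp
  fix r assume "r \<in> set L" "L!i < r"
  then obtain j where j: "j < length L" "r = L!j" "L!i < L!j" by (auto simp: in_set_conv_nth)
  then have "Suc i \<le> j" using strict_sorted_nth_less_iff[OF assms(1), of i j] assms(2) by simp
  then show "L!Suc i \<le> r" using j sorted_nth_mono[OF strict_sorted_imp_sorted[OF assms(1)]] by simp
qed

lemma strict_sorted_below_last:
  fixes L :: "'a::linorder list"
  assumes "sorted_wrt (<) L" "L \<noteq> []"
  shows "{p\<in>set L. p < last L} = (\<lambda>i. L!i) ` {..<length L - 1}"
proof -
  have below: "L!i < last L \<longleftrightarrow> i < length L - 1" if "i < length L" for i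
    using strict_sorted_nth_less_iff[OF assms(1) that, of "length L - 1"] assms(2)
    by (simp add: last_conv_nth)
  show ?thesis
  proof (intro set_eqI iffI)
    fix p assume "p \<in> {p\<in>set L. p < last L}"
    then obtain i where "i < length L" "p = L!i" "L!i < last L" by (auto simp: in_set_conv_nth)
    then show "p \<in> (\<lambda>i. L!i) ` {..<length L - 1}" using below by auto
  next
    fix p assume "p \<in> (\<lambda>i. L!i) ` {..<length L - 1}"
    then obtain i where "i < length L - 1" "p = L!i" by auto
    then show "p \<in> {p\<in>set L. p < last L}" using below[of i] by auto
  qed
qed

lemma psum_eq_riemann_sum:
  fixes L :: "real list"
  assumes "sorted_wrt (<) L" "L \<noteq> []"
  shows "psum \<Xi> L = riemann_sum \<Xi> (set L)"
proof -
  have "inj_on (\<lambda>i. L!i) {..<length L - 1}"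
  proof (rule inj_onI)
    fix i j assume ij: "i \<in> {..<length L - 1}" "j \<in> {..<length L - 1}" "L!i = L!j"
    then have "i < length L" "j < length L" by auto
    then show "i = j"
      using ij(3) strict_sorted_nth_less_iff[OF assms(1), of i j] strict_sorted_nth_less_iff[OF assms(1), of j i]
      by (metis less_irrefl nat_neq_iff)
  qed
  then have "riemann_sum \<Xi> (set L) = (\<Sum>i<length L - 1. \<Xi> (L!i) (next_point (set L) (L!i)))"
    unfolding riemann_sum_def strict_sorted_Min_Max[OF assms] strict_sorted_below_last[OF assms]
    by (simp add: sum.reindex)
  also have "\<dots> = psum \<Xi> L"
    unfolding psum_def using next_point_strict_sorted[OF assms(1)] by (intro sum.cong) auto
  finally show ?thesis ..
qed

lemma mesh_less_iff_gaps_below: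
  fixes L :: "real list"
  assumes "sorted_wrt (<) L" "L \<noteq> []" "d > 0"
  shows "mesh L < d \<longleftrightarrow> gaps_below (set L) d"
proof -
  have "mesh L < d \<longleftrightarrow> (\<forall>i<length L - 1. L!Suc i - L!i < d)"
    unfolding mesh_def using assms(3) by (subst Max_less_iff) auto
  also have "\<dots> \<longleftrightarrow> (\<forall>p\<in>(\<lambda>i. L!i) ` {..<length L - 1}. next_point (set L) p - p < d)"
    by (auto simp: next_point_strict_sorted[OF assms(1)])
  also have "\<dots> \<longleftrightarrow> gaps_below (set L) d"
    unfolding gaps_below_def strict_sorted_Min_Max[OF assms(1,2)]
      strict_sorted_below_last[OF assms(1,2), symmetric] by auto
  finally show ?thesis .
qed

lemma is_partition_sorted_list_of_set:
  assumes "is_point_partition S 0 t"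
  shows "is_partition t (sorted_list_of_set S)" "set (sorted_list_of_set S) = S"
  using assms strict_sorted_Min_Max[of "sorted_list_of_set S"]
  unfolding is_point_partition_def is_partition_def by auto

lemma partition_list_iff_point_partition:
  assumes "sorted_wrt (<) P" "d > 0"
  shows "is_partition t P \<and> mesh P < d \<longleftrightarrow> is_point_partition (set P) 0 t \<and> gaps_below (set P) d"
proof (cases "P = []")
  case False
  then show ?thesis
    using assms mesh_less_iff_gaps_below[OF assms(1) False assms(2)] strict_sorted_Min_Max[OF assms(1) False]
    unfolding is_partition_def is_point_partition_def by simp
qed (simp add: is_partition_def is_point_partition_def)

lemma has_psum_integral_iff:
  "has_psum_integral \<Xi> t I \<longleftrightarrow>
    (\<forall>e>0. \<exists>d>0. \<forall>S. is_point_partition S 0 t \<and> gaps_below S d \<longrightarrow> norm (riemann_sum \<Xi> S - I) < e)"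
  unfolding has_psum_integral_def
proof (intro iffI allI impI)
  fix e :: real
  assume lists: "\<forall>e>0. \<exists>d>0. \<forall>P. is_partition t P \<and> mesh P < d \<longrightarrow> norm (psum \<Xi> P - I) < e"
    and "e > 0"
  then obtain d where d: "d > 0" "\<And>P. is_partition t P \<Longrightarrow> mesh P < d \<Longrightarrow> norm (psum \<Xi> P - I) < e"
    by blast
  have "norm (riemann_sum \<Xi> S - I) < e" if "is_point_partition S 0 t" "gaps_below S d" for S
  proof -
    let ?P = "sorted_list_of_set S"
    note P = is_partition_sorted_list_of_set[OF that(1)]
    have sorted: "sorted_wrt (<) ?P" "?P \<noteq> []" using P(1) unfolding is_partition_def by auto
    then have "mesh ?P < d"
      using partition_list_iff_point_partition[OF sorted(1) d(1), of t] P that by simp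
    then have "norm (psum \<Xi> ?P - I) < e" using d(2) P(1) by blast
    moreover have "psum \<Xi> ?P = riemann_sum \<Xi> S" using psum_eq_riemann_sum[OF sorted, of \<Xi>] P(2) by simp
    ultimately show ?thesis by simp
  qed
  then show "\<exists>d>0. \<forall>S. is_point_partition S 0 t \<and> gaps_below S d \<longrightarrow> norm (riemann_sum \<Xi> S - I) < e"
    using d(1) by blast
next
  fix e :: real
  assume sets: "\<forall>e>0. \<exists>d>0. \<forall>S. is_point_partition S 0 t \<and> gaps_below S d \<longrightarrow> norm (riemann_sum \<Xi> S - I) < e"
    and "e > 0"
  then obtain d where d: "d > 0"
    "\<And>S. is_point_partition S 0 t \<Longrightarrow> gaps_below S d \<Longrightarrow> norm (riemann_sum \<Xi> S - I) < e"
    by blast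
  have "norm (psum \<Xi> P - I) < e" if "is_partition t P" "mesh P < d" for P
  proof -
    have sorted: "sorted_wrt (<) P" "P \<noteq> []" using that(1) unfolding is_partition_def by auto
    then have "is_point_partition (set P) 0 t" "gaps_below (set P) d"
      using partition_list_iff_point_partition[OF sorted(1) d(1), of t] that by simp_all
    then show ?thesis using d(2) psum_eq_riemann_sum[OF sorted, of \<Xi>] by simp
  qed
  then show "\<exists>d>0. \<forall>P. is_partition t P \<and> mesh P < d \<longrightarrow> norm (psum \<Xi> P - I) < e"
    using d(1) by blast
qed

lemma riemann_sum_telescope:
  assumes "is_point_partition S s t"
  shows "riemann_sum (\<lambda>p q. q - p) S = t - s"
proof -
  let ?L = "sorted_list_of_set S"
  have L: "sorted_wrt (<) ?L" "?L \<noteq> []" "set ?L = S"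
    using assms unfolding is_point_partition_def by auto
  have "riemann_sum (\<lambda>p q. q - p) S = psum (\<lambda>p q. q - p) ?L"
    using psum_eq_riemann_sum[OF L(1,2), of "\<lambda>p q. q - p"] unfolding L(3) ..
  also have "\<dots> = last ?L - hd ?L"
    unfolding psum_def using L(2)
    by (simp add: sum_lessThan_telescope[where f = "\<lambda>i. ?L ! i"] hd_conv_nth last_conv_nth)
  also have "\<dots> = t - s"
    using strict_sorted_Min_Max[OF L(1,2)] L(3) assms unfolding is_point_partition_def by simp
  finally show ?thesis .
qed

lemma riemann_sum_powr_le:
  assumes "is_point_partition S s t" "gaps_below S d" "\<theta> \<ge> 1"
  shows "riemann_sum (\<lambda>p q. (q - p) powr \<theta>) S \<le> d powr (\<theta> - 1) * (t - s)"
proof -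
  note P = is_point_partition_bounds[OF assms(1)]
  have "riemann_sum (\<lambda>p q. (q - p) powr \<theta>) S \<le> riemann_sum (\<lambda>p q. d powr (\<theta> - 1) * (q - p)) S"
  proof (rule riemann_sum_mono)
    fix p assume p: "p \<in> S" "p < Max S"
    have "Max S \<in> S" using P by (auto intro: Max_in)
    then have gap: "0 < next_point S p - p" "next_point S p - p \<le> d"
      using next_point[OF P(4) _ p(2)] assms(2) p unfolding gaps_below_def by auto
    then have "(next_point S p - p) powr \<theta> = (next_point S p - p) powr (\<theta> - 1) * (next_point S p - p)"
      by (simp add: powr_diff)
    also have "\<dots> \<le> d powr (\<theta> - 1) * (next_point S p - p)"
      using gap assms(3) by (intro mult_right_mono powr_mono2) auto
    finally show "(next_point S p - p) powr \<theta> \<le> d powr (\<theta> - 1) * (next_point S p - p)" .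
  qed
  also have "\<dots> = d powr (\<theta> - 1) * (t - s)"
    by (simp add: riemann_sum_cmult riemann_sum_telescope[OF assms(1)])
  finally show ?thesis .
qed

definition uniform_points :: "real \<Rightarrow> real \<Rightarrow> nat \<Rightarrow> real set" where
  "uniform_points a b n = (\<lambda>k. a + real k * ((b - a) / real (Suc n))) ` {..Suc n}"

lemma uniform_points:
  assumes "a \<le> b"
  shows "is_point_partition (uniform_points a b n) a b"
    "(b - a) / real (Suc n) < d \<Longrightarrow> gaps_below (uniform_points a b n) d"
proof -
  define h where "h = (b - a) / real (Suc n)"
  define f where "f k = a + real k * h" for k
  have U: "uniform_points a b n = f ` {..Suc n}" unfolding uniform_points_def f_def h_def ..
  have h: "h \<ge> 0" unfolding h_def using assms by simp
  have mono: "f k \<le> f l" if "k \<le> l" for k l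
    unfolding f_def using h that by (simp add: mult_right_mono)
  have ends: "f 0 = a" "f (Suc n) = b" unfolding f_def h_def by (simp_all del: of_nat_Suc)
  show part: "is_point_partition (uniform_points a b n) a b"
    unfolding is_point_partition_def U using mono ends
    by (auto intro!: Min_eqI Max_eqI image_eqI[of a f 0] image_eqI[of b f "Suc n"])
  assume small: "(b - a) / real (Suc n) < d"
  show "gaps_below (uniform_points a b n) d" unfolding gaps_below_def
  proof (intro ballI impI)
    fix p assume p: "p \<in> uniform_points a b n" "p < Max (uniform_points a b n)"
    then obtain k where k: "k \<le> Suc n" "p = f k" unfolding U by auto
    have "Max (uniform_points a b n) = b" using part unfolding is_point_partition_def by simp
    then have "k \<noteq> Suc n" "a < b" using p(2) k ends mono[of 0 k] by auto
    moreover have "h > 0" using \<open>a < b\<close> unfolding h_def by simp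
    ultimately have "f (Suc k) \<in> uniform_points a b n" "p < f (Suc k)"
      using k unfolding U f_def by (auto simp: algebra_simps intro!: image_eqI[of _ _ "Suc k"])
    then have "next_point (uniform_points a b n) p \<le> f (Suc k)"
      using next_point(3) part unfolding is_point_partition_def by blast
    moreover have "f (Suc k) = p + h" using k(2) unfolding f_def by (simp add: algebra_simps)
    ultimately show "next_point (uniform_points a b n) p - p < d"
      using small[folded h_def] by linarith
  qed
qed

lemma eventually_gaps_below_uniform_points:
  assumes "a \<le> b" "d > 0"
  shows "eventually (\<lambda>n. gaps_below (uniform_points a b n) d) sequentially"
proof -
  obtain N :: nat where N: "(b - a) / d < real N" using reals_Archimedean2 by blast
  have "(b - a) / real (Suc n) < d" if "n \<ge> N" for n
  proof -
    have "d * real N \<le> d * real (Suc n)" using that assms(2) by simp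
    then have "b - a < d * real (Suc n)" using N assms(2) by (simp add: field_simps)
    then show ?thesis by (simp add: field_simps)
  qed
  then show ?thesis using uniform_points(2)[OF assms(1)] unfolding eventually_sequentially by blast
qed

lemma fine_partition_exists:
  assumes "a \<le> b" "d > 0"
  obtains S where "is_point_partition S a b" "gaps_below S d"
  using eventually_happens'[OF trivial_limit_sequentially eventually_gaps_below_uniform_points[OF assms]]
    uniform_points(1)[OF assms(1)] by blast

lemma gaps_below_mono: "gaps_below S d \<Longrightarrow> d \<le> d' \<Longrightarrow> gaps_below S d'"
  unfolding gaps_below_def by force

lemma has_psum_integral_unique:
  assumes "has_psum_integral \<Xi> t I" "has_psum_integral \<Xi> t J" "0 \<le> t"
  shows "I = J"
proof -
  have "norm (I - J) < e" if e: "e > 0" for e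
  proof -
    obtain d1 where d1: "d1 > 0"
      "\<And>S. is_point_partition S 0 t \<Longrightarrow> gaps_below S d1 \<Longrightarrow> norm (riemann_sum \<Xi> S - I) < e/2"
      using assms(1) e unfolding has_psum_integral_iff by (meson half_gt_zero)
    obtain d2 where d2: "d2 > 0"
      "\<And>S. is_point_partition S 0 t \<Longrightarrow> gaps_below S d2 \<Longrightarrow> norm (riemann_sum \<Xi> S - J) < e/2"
      using assms(2) e unfolding has_psum_integral_iff by (meson half_gt_zero)
    obtain S where S: "is_point_partition S 0 t" "gaps_below S (min d1 d2)"
      using fine_partition_exists[OF assms(3), of "min d1 d2"] d1(1) d2(1) by auto
    then have "norm (riemann_sum \<Xi> S - I) < e/2" "norm (riemann_sum \<Xi> S - J) < e/2"
      using d1 d2 gaps_below_mono[OF S(2)] by auto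
    then show ?thesis using norm_diff_triangle_less[of I "riemann_sum \<Xi> S" "e/2" J "e/2"]
      by (simp add: norm_minus_commute)
  qed
  then have "\<not> norm (I - J) > 0" by blast
  then show ?thesis by simp
qed

lemma psum_integral_eqI: "has_psum_integral \<Xi> t I \<Longrightarrow> 0 \<le> t \<Longrightarrow> psum_integral \<Xi> t = I"
  unfolding psum_integral_def using has_psum_integral_unique by blast

lemma has_psum_integral_0: "has_psum_integral \<Xi> 0 0"
  unfolding has_psum_integral_iff
proof (intro allI impI exI[of _ 1] conjI)
  fix e :: real and S assume "e > 0" "is_point_partition S 0 0 \<and> gaps_below S 1"
  then have "S = {0}" using is_point_partition_singleton by blast
  then show "norm (riemann_sum \<Xi> S - 0) < e" using \<open>e > 0\<close> by simp
qed simp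

lemma has_psum_integral_add:
  assumes "has_psum_integral \<Xi> t I" "has_psum_integral \<Psi> t J"
  shows "has_psum_integral (\<lambda>u v. \<Xi> u v + \<Psi> u v) t (I + J)"
  unfolding has_psum_integral_def
proof (intro allI impI)
  fix e :: real assume e: "e > 0"
  obtain d1 where d1: "d1 > 0" "\<And>P. is_partition t P \<and> mesh P < d1 \<Longrightarrow> norm (psum \<Xi> P - I) < e/2"
    using assms(1) e unfolding has_psum_integral_def by (meson half_gt_zero)
  obtain d2 where d2: "d2 > 0" "\<And>P. is_partition t P \<and> mesh P < d2 \<Longrightarrow> norm (psum \<Psi> P - J) < e/2"
    using assms(2) e unfolding has_psum_integral_def by (meson half_gt_zero)
  have "norm (psum (\<lambda>u v. \<Xi> u v + \<Psi> u v) P - (I + J)) < e"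
    if "is_partition t P" "mesh P < min d1 d2" for P
  proof -
    have eq: "psum (\<lambda>u v. \<Xi> u v + \<Psi> u v) P - (I + J) = (psum \<Xi> P - I) + (psum \<Psi> P - J)"
      unfolding psum_def by (simp add: sum.distrib algebra_simps)
    have "norm (psum \<Xi> P - I) < e/2" "norm (psum \<Psi> P - J) < e/2" using d1(2) d2(2) that by auto
    then show ?thesis unfolding eq by (intro norm_triangle_lt) simp
  qed
  then show "\<exists>d>0. \<forall>P. is_partition t P \<and> mesh P < d \<longrightarrow> norm (psum (\<lambda>u v. \<Xi> u v + \<Psi> u v) P - (I + J)) < e"
    using d1(1) d2(1) by (intro exI[of _ "min d1 d2"]) auto
qed

lemma has_psum_integral_scaleR:
  assumes "has_psum_integral \<Xi> t I"
  shows "has_psum_integral (\<lambda>u v. c *\<^sub>R \<Xi> u v) t (c *\<^sub>R I)"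
  unfolding has_psum_integral_def
proof (intro allI impI)
  fix e :: real assume e: "e > 0"
  have "e / (\<bar>c\<bar> + 1) > 0" using e by (intro divide_pos_pos) auto
  then obtain d where d: "d > 0" "\<And>P. is_partition t P \<and> mesh P < d \<Longrightarrow> norm (psum \<Xi> P - I) < e / (\<bar>c\<bar> + 1)"
    using assms unfolding has_psum_integral_def by blast
  have "norm (psum (\<lambda>u v. c *\<^sub>R \<Xi> u v) P - c *\<^sub>R I) < e" if "is_partition t P" "mesh P < d" for P
  proof -
    have "psum (\<lambda>u v. c *\<^sub>R \<Xi> u v) P - c *\<^sub>R I = c *\<^sub>R (psum \<Xi> P - I)"
      unfolding psum_def by (simp add: scaleR_sum_right scaleR_diff_right)
    then have "norm (psum (\<lambda>u v. c *\<^sub>R \<Xi> u v) P - c *\<^sub>R I) = \<bar>c\<bar> * norm (psum \<Xi> P - I)"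
      by simp
    also have "\<dots> \<le> \<bar>c\<bar> * (e / (\<bar>c\<bar> + 1))" using d(2) that by (intro mult_left_mono) (auto intro: less_imp_le)
    also have "\<dots> < e" using e by (simp add: field_simps)
    finally show ?thesis .
  qed
  then show "\<exists>d>0. \<forall>P. is_partition t P \<and> mesh P < d \<longrightarrow> norm (psum (\<lambda>u v. c *\<^sub>R \<Xi> u v) P - c *\<^sub>R I) < e"
    using d(1) by blast
qed

lemma has_psum_integral_increment_approx:
  assumes "has_psum_integral \<Xi> s Is" "has_psum_integral \<Xi> t It" "0 \<le> s" "s \<le> t" "e > 0"
  obtains S where "is_point_partition S s t" "norm (It - Is - riemann_sum \<Xi> S) < e"
proof -
  obtain d1 where d1: "d1 > 0"
    "\<And>S. is_point_partition S 0 s \<Longrightarrow> gaps_below S d1 \<Longrightarrow> norm (riemann_sum \<Xi> S - Is) < e/2"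
    using assms(1,5) unfolding has_psum_integral_iff by (meson half_gt_zero)
  obtain d2 where d2: "d2 > 0"
    "\<And>S. is_point_partition S 0 t \<Longrightarrow> gaps_below S d2 \<Longrightarrow> norm (riemann_sum \<Xi> S - It) < e/2"
    using assms(2,5) unfolding has_psum_integral_iff by (meson half_gt_zero)
  obtain S1 where S1: "is_point_partition S1 0 s" "gaps_below S1 (min d1 d2)"
    using fine_partition_exists[OF assms(3)] d1(1) d2(1) by (metis min_less_iff_conj)
  obtain S2 where S2: "is_point_partition S2 s t" "gaps_below S2 (min d1 d2)"
    using fine_partition_exists[OF assms(4)] d1(1) d2(1) by (metis min_less_iff_conj)
  note U = is_point_partition_union[OF S1(1) S2(1)]
  have fin: "finite (S1 \<union> S2)" "s \<in> S1 \<union> S2" using is_point_partition_bounds[OF U(1)] S2(1)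
    unfolding is_point_partition_def by (auto intro: Min_in)
  have "gaps_below (S1 \<union> S2) (min d1 d2)" using gaps_below_split[OF fin] S1(2) S2(2) U(2,3) by simp
  then have "norm (riemann_sum \<Xi> S1 - Is) + norm (It - riemann_sum \<Xi> (S1 \<union> S2)) < e"
    using d1(2)[OF S1(1)] d2(2)[OF U(1)] gaps_below_mono[OF S1(2)]
    by (fastforce simp: norm_minus_commute intro: gaps_below_mono)
  moreover have "riemann_sum \<Xi> (S1 \<union> S2) = riemann_sum \<Xi> S1 + riemann_sum \<Xi> S2"
    using riemann_sum_split[OF fin, of \<Xi>] U(2,3) by simp
  ultimately have "norm (It - Is - riemann_sum \<Xi> S2) < e"
    using norm_triangle_lt[of "riemann_sum \<Xi> S1 - Is" "It - riemann_sum \<Xi> (S1 \<union> S2)" e]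
    by (simp add: algebra_simps)
  then show thesis using that S2(1) by blast
qed

section \<open>Hoelder paths and real powers\<close>

lemma hoelder_path_boundsI:
  fixes f :: "real \<Rightarrow> 'a::real_normed_vector"
  assumes "T > 0"
    and sup: "\<And>t. 0 \<le> t \<Longrightarrow> t \<le> T \<Longrightarrow> norm (f t) \<le> K1"
    and quot: "\<And>s t. 0 \<le> s \<Longrightarrow> s < t \<Longrightarrow> t \<le> T \<Longrightarrow> norm (f t - f s) \<le> K2 * (t - s) powr a"
  shows "hoelder_path a T f" "hoelder_norm a T f \<le> K1 + K2"
proof -
  have K2: "q \<le> K2" if q: "q \<in> hoelder_quot a T f" for q
  proof -
    obtain z where z: "q = (\<lambda>(s,t). norm (f t - f s) / (t - s) powr a) z"
      "z \<in> {(s,t). 0 \<le> s \<and> s < t \<and> t \<le> T}"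
      using q unfolding hoelder_quot_def by (rule imageE)
    obtain s t where st: "0 \<le> s" "s < t" "t \<le> T" "q = norm (f t - f s) / (t - s) powr a"
      using z by (cases z) auto
    then show ?thesis using quot[OF st(1-3)] by (simp add: divide_le_eq)
  qed
  have K1: "p \<le> K1" if "p \<in> hoelder_sup T f" for p
    using that sup unfolding hoelder_sup_def by auto
  have "(0, T) \<in> {(s,t). 0 \<le> s \<and> s < t \<and> t \<le> T}" "0 \<in> {0..T}" using assms(1) by auto
  then have ne: "hoelder_sup T f \<noteq> {}" "hoelder_quot a T f \<noteq> {}"
    unfolding hoelder_sup_def hoelder_quot_def by blast+
  show "hoelder_path a T f" unfolding hoelder_path_def using K1 K2 by (meson bdd_aboveI)
  have "Sup (hoelder_sup T f) \<le> K1" "Sup (hoelder_quot a T f) \<le> K2"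
    using ne K1 K2 by (simp_all add: cSup_least)
  then show "hoelder_norm a T f \<le> K1 + K2" unfolding hoelder_norm_def by simp
qed

lemma hoelder_norm_cong:
  assumes "\<And>t. 0 \<le> t \<Longrightarrow> t \<le> T \<Longrightarrow> f t = h t"
  shows "hoelder_norm a T f = hoelder_norm a T h"
proof -
  have "hoelder_sup T f = hoelder_sup T h" "hoelder_quot a T f = hoelder_quot a T h"
    unfolding hoelder_sup_def hoelder_quot_def using assms by (auto intro!: image_cong)
  then show ?thesis unfolding hoelder_norm_def by simp
qed

lemma hoelder_path_Sup_bounds:
  assumes "hoelder_path g T f"
  shows "0 \<le> t \<Longrightarrow> t \<le> T \<Longrightarrow> norm (f t) \<le> Sup (hoelder_sup T f)"
    "0 \<le> s \<Longrightarrow> s < t \<Longrightarrow> t \<le> T \<Longrightarrow> norm (f t - f s) / (t - s) powr g \<le> Sup (hoelder_quot g T f)"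
proof -
  have bdd: "bdd_above (hoelder_sup T f)" "bdd_above (hoelder_quot g T f)"
    using assms unfolding hoelder_path_def by simp_all
  show "norm (f t) \<le> Sup (hoelder_sup T f)" if "0 \<le> t" "t \<le> T"
    using that by (intro cSup_upper[OF _ bdd(1)]) (simp add: hoelder_sup_def)
  show "norm (f t - f s) / (t - s) powr g \<le> Sup (hoelder_quot g T f)" if "0 \<le> s" "s < t" "t \<le> T"
  proof (rule cSup_upper[OF _ bdd(2)])
    show "norm (f t - f s) / (t - s) powr g \<in> hoelder_quot g T f"
      unfolding hoelder_quot_def using that by (intro image_eqI[where x = "(s, t)"]) simp_all
  qed
qed

lemma hoelder_path_Sups_nonneg:
  assumes "hoelder_path g T f" "T > 0"
  shows "Sup (hoelder_sup T f) \<ge> 0" "Sup (hoelder_quot g T f) \<ge> 0"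
proof -
  have "0 \<le> norm (f 0)" "0 \<le> norm (f T - f 0) / (T - 0) powr g" by simp_all
  then show "Sup (hoelder_sup T f) \<ge> 0" "Sup (hoelder_quot g T f) \<ge> 0"
    using hoelder_path_Sup_bounds(1)[OF assms(1), of 0] hoelder_path_Sup_bounds(2)[OF assms(1), of 0 T]
      assms(2) by linarith+
qed

lemma hoelder_norm_nonneg: "hoelder_path g T f \<Longrightarrow> T > 0 \<Longrightarrow> hoelder_norm g T f \<ge> 0"
  unfolding hoelder_norm_def using hoelder_path_Sups_nonneg by fastforce

lemma norm_le_hoelder_norm:
  assumes "hoelder_path g T f" "T > 0" "0 \<le> t" "t \<le> T"
  shows "norm (f t) \<le> hoelder_norm g T f"
  using hoelder_path_Sup_bounds(1)[OF assms(1,3,4)] hoelder_path_Sups_nonneg(2)[OF assms(1,2)]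
  unfolding hoelder_norm_def by linarith

lemma norm_diff_le_hoelder_norm:
  assumes "hoelder_path g T f" "T > 0" "0 \<le> s" "s \<le> t" "t \<le> T"
  shows "norm (f t - f s) \<le> hoelder_norm g T f * (t - s) powr g"
proof (cases "s = t")
  case False
  then have "norm (f t - f s) \<le> Sup (hoelder_quot g T f) * (t - s) powr g"
    using hoelder_path_Sup_bounds(2)[OF assms(1), of s t] assms by (simp add: divide_le_eq)
  also have "\<dots> \<le> hoelder_norm g T f * (t - s) powr g"
    using hoelder_path_Sups_nonneg(1)[OF assms(1,2)] unfolding hoelder_norm_def
    by (intro mult_right_mono) simp_all
  finally show ?thesis .
qed (simp add: hoelder_norm_nonneg[OF assms(1,2)])

lemma powr_le_powr_scaled:
  fixes h T p q :: real
  assumes "0 \<le> h" "h \<le> T" "0 \<le> q" "q \<le> p"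
  shows "h powr p \<le> T powr (p - q) * h powr q"
proof (cases "h = 0")
  case False
  then have "h powr p = h powr (p - q) * h powr q" using assms by (simp flip: powr_add)
  also have "\<dots> \<le> T powr (p - q) * h powr q"
    using assms by (intro mult_right_mono powr_mono2) auto
  finally show ?thesis .
qed (use assms in simp)

lemma exists_pos_powr_less:
  fixes c e p :: real
  assumes "p > 0" "e > 0"
  shows "\<exists>d>0. c * d powr p < e"
proof -
  define d where "d = (e / (\<bar>c\<bar> + 1)) powr (1 / p)"
  have pos: "e / (\<bar>c\<bar> + 1) > 0" using assms by simp
  have "d powr p = e / (\<bar>c\<bar> + 1)"
    unfolding d_def using assms pos by (simp add: powr_powr)
  moreover have "c * (e / (\<bar>c\<bar> + 1)) \<le> \<bar>c\<bar> * (e / (\<bar>c\<bar> + 1))"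
    using pos by (intro mult_right_mono) auto
  moreover have "\<bar>c\<bar> * (e / (\<bar>c\<bar> + 1)) < e" using assms(2) by (simp add: field_simps)
  ultimately have "c * d powr p < e" by simp
  moreover have "d > 0" unfolding d_def using pos by (subst powr_gt_zero) linarith
  ultimately show ?thesis by blast
qed

lemma hoelder_product_le:
  fixes s u t T X H g a e \<theta> :: real
  assumes "0 \<le> s" "s \<le> u" "u \<le> t" "t \<le> T" "0 \<le> X" "X \<le> H * (u - s) powr g" "H \<ge> 0"
    "a > 0" "g > 0" "e > 0" "\<theta> \<ge> 0" "\<theta> \<le> a + g * e"
  shows "(t - u) powr a * X powr e \<le> H powr e * T powr (a + g * e - \<theta>) * (t - s) powr \<theta>"
proof -
  have "X powr e \<le> (H * (u - s) powr g) powr e" using assms by (intro powr_mono2) auto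
  also have "\<dots> = H powr e * (u - s) powr (g * e)" using assms by (simp add: powr_mult powr_powr)
  also have "\<dots> \<le> H powr e * (t - s) powr (g * e)" using assms by (intro mult_left_mono powr_mono2) auto
  finally have "(t - u) powr a * X powr e \<le> (t - s) powr a * (H powr e * (t - s) powr (g * e))"
    using assms by (intro mult_mono powr_mono2) auto
  also have "\<dots> = H powr e * (t - s) powr (a + g * e)" by (simp add: powr_add)
  also have "\<dots> \<le> H powr e * (T powr (a + g * e - \<theta>) * (t - s) powr \<theta>)"
    using powr_le_powr_scaled[of "t - s" T \<theta> "a + g * e"] assms by (intro mult_left_mono) auto
  finally show ?thesis by (simp add: mult_ac)
qed

lemma le_powr_interpolation:
  fixes X c P Q l :: real
  assumes "0 \<le> X" "X \<le> c * P" "X \<le> c * Q" "0 \<le> c" "0 \<le> l" "l \<le> 1"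
  shows "X \<le> c * (P powr l * Q powr (1 - l))"
proof (cases "X = 0")
  case True
  then show ?thesis using assms by simp
next
  case False
  then have "c * P > 0" "c * Q > 0" using assms by linarith+
  then have pos: "c > 0" "P > 0" "Q > 0" using assms(4) by (auto simp: zero_less_mult_iff)
  have "X = X powr l * X powr (1 - l)" using False assms(1) by (simp flip: powr_add)
  also have "\<dots> \<le> (c * P) powr l * (c * Q) powr (1 - l)"
    using assms by (intro mult_mono powr_mono2) auto
  also have "\<dots> = c * (P powr l * Q powr (1 - l))"
    using pos by (simp add: powr_mult mult_ac flip: powr_add)
  finally show ?thesis .
qed

lemma little_o_of_superlinear_bound:
  fixes r n :: "'a \<Rightarrow> real"
  assumes "\<rho> > 0" "K \<ge> 0" "\<And>y. P y \<Longrightarrow> n y \<ge> 0"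
    and bound: "\<And>y. P y \<Longrightarrow> n y \<le> 1 \<Longrightarrow> r y \<le> K * (n y * n y powr \<rho>)"
  shows "\<forall>e>0. \<exists>d>0. \<forall>y. P y \<and> n y < d \<longrightarrow> r y \<le> e * n y"
proof (intro allI impI)
  fix e :: real assume "e > 0"
  then obtain d where d: "d > 0" "K * d powr \<rho> < e" using exists_pos_powr_less[OF assms(1)] by blast
  have "r y \<le> e * n y" if "P y" "n y < min 1 d" for y
  proof -
    have "K * n y powr \<rho> \<le> K * d powr \<rho>"
      using that assms(1-3) by (intro mult_left_mono powr_mono2) auto
    then have "n y * (K * n y powr \<rho>) \<le> n y * e" using d(2) assms(3)[OF that(1)] by (intro mult_left_mono) auto
    then show ?thesis using bound[OF that(1)] that(2) by (simp add: mult_ac)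
  qed
  then show "\<exists>d>0. \<forall>y. P y \<and> n y < d \<longrightarrow> r y \<le> e * n y" using d(1) by (intro exI[of _ "min 1 d"]) auto
qed

section \<open>The sewing lemma\<close>

lemma is_point_partition_midpoint_split:
  assumes "is_point_partition S s t" "s < t"
  obtains u v where "u \<in> S" "v \<in> S" "s \<le> u" "u < v" "v \<le> t" "u \<le> (s + t) / 2" "(s + t) / 2 < v"
    "riemann_sum \<Xi> S = riemann_sum \<Xi> (S \<inter> {..u}) + \<Xi> u v + riemann_sum \<Xi> (S \<inter> {v..})"
proof -
  note P = is_point_partition_bounds[OF assms(1)]
  define m where "m = (s + t) / 2"
  define u where "u = Max {p\<in>S. p \<le> m}"
  have lower: "finite {p\<in>S. p \<le> m}" "s \<in> {p\<in>S. p \<le> m}" using P assms(2) unfolding m_def by auto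
  have "u \<in> {p\<in>S. p \<le> m}" unfolding u_def using lower by (intro Max_in) auto
  then have u: "u \<in> S" "u \<le> m" "s \<le> u" unfolding u_def using Max_ge[OF lower] by auto
  then have "u < t" using assms(2) unfolding m_def by simp
  define v where "v = next_point S u"
  have v: "v \<in> S" "u < v" "v \<le> t"
    using next_point[OF P(4) P(3) \<open>u < t\<close>] unfolding v_def by auto
  have "m < v"
  proof (rule ccontr)
    assume "\<not> m < v"
    then have "v \<le> u" unfolding u_def using v(1) lower(1) by (intro Max_ge) auto
    then show False using v(2) by simp
  qed
  have "S \<inter> {u..} \<inter> {..v} = {u, v}"
    using next_point(3)[OF P(4), of _ u] u v unfolding v_def by fastforce
  moreover have "S \<inter> {u..} \<inter> {v..} = S \<inter> {v..}" using v(2) by auto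
  moreover have "riemann_sum \<Xi> (S \<inter> {u..})
      = riemann_sum \<Xi> (S \<inter> {u..} \<inter> {..v}) + riemann_sum \<Xi> (S \<inter> {u..} \<inter> {v..})"
    using P(4) v(1,2) by (intro riemann_sum_split) auto
  ultimately have "riemann_sum \<Xi> (S \<inter> {u..}) = \<Xi> u v + riemann_sum \<Xi> (S \<inter> {v..})"
    using riemann_sum_doubleton[OF v(2), of \<Xi>] by simp
  then have "riemann_sum \<Xi> S = riemann_sum \<Xi> (S \<inter> {..u}) + \<Xi> u v + riemann_sum \<Xi> (S \<inter> {v..})"
    using riemann_sum_split[OF P(4) u(1), of \<Xi>] by (simp add: add.assoc)
  then show thesis using that u v \<open>m < v\<close> unfolding m_def by blast
qed

lemma norm_add_diff_diff_le:
  fixes a b c d :: "'a::real_normed_vector"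
  shows "norm (a + b - c - d) \<le> norm a + norm b + norm c + norm d"
  using norm_triangle_ineq4[of "a + b - c" d] norm_triangle_ineq4[of "a + b" c] norm_triangle_ineq[of a b]
  by linarith

(* The fixed point of K = 2^(1-theta) K + 2: splitting [s,t] near its midpoint costs two
   defects of size M |t-s|^theta plus the bounds for two pieces of at most half the length. *)
definition sewing_factor :: "real \<Rightarrow> real" where
  "sewing_factor \<theta> = 2 / (1 - 2 powr (1 - \<theta>))"

lemma sewing_factor:
  assumes "\<theta> > 1"
  shows "sewing_factor \<theta> > 0" "sewing_factor \<theta> * 2 powr (1 - \<theta>) + 2 = sewing_factor \<theta>"
proof -
  have "2 powr (1 - \<theta>) < 2 powr 0" using assms by (intro powr_less_mono) auto
  then have lt: "2 powr (1 - \<theta>) < 1" by simp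
  then show "sewing_factor \<theta> > 0" unfolding sewing_factor_def by simp
  have "1 - 2 powr (1 - \<theta>) \<noteq> 0" using lt by linarith
  then show "sewing_factor \<theta> * 2 powr (1 - \<theta>) + 2 = sewing_factor \<theta>"
    unfolding sewing_factor_def by (simp add: field_simps)
qed

locale sewing_germ =
  fixes T \<theta> M :: real and \<Xi> :: "real \<Rightarrow> real \<Rightarrow> 'w::banach"
  assumes theta: "\<theta> > 1" and M: "M \<ge> 0"
    and diag: "\<And>s. 0 \<le> s \<Longrightarrow> s \<le> T \<Longrightarrow> \<Xi> s s = 0"
    and delta: "\<And>s u t. 0 \<le> s \<Longrightarrow> s \<le> u \<Longrightarrow> u \<le> t \<Longrightarrow> t \<le> T \<Longrightarrow>
        norm (\<Xi> s t - \<Xi> s u - \<Xi> u t) \<le> M * (t - s) powr \<theta>"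
begin

lemma factor_M_nonneg: "sewing_factor \<theta> * M \<ge> 0"
  using sewing_factor(1)[OF theta] M by simp

lemma riemann_sum_germ_le:
  assumes "is_point_partition S s t" "0 \<le> s" "t \<le> T"
  shows "norm (riemann_sum \<Xi> S - \<Xi> s t) \<le> sewing_factor \<theta> * M * (t - s) powr \<theta>"
  using assms
proof (induction "card S" arbitrary: S s t rule: less_induct)
  case less
  note P = is_point_partition_bounds[OF less.prems(1)]
  show ?case
  proof (cases "s < t")
    case False
    then have "S = {s}" "t = s" using P is_point_partition_singleton less.prems(1) by auto
    then show ?thesis using diag less.prems factor_M_nonneg by simp
  next
    case True
    obtain u v where uv: "u \<in> S" "v \<in> S" "s \<le> u" "u < v" "v \<le> t" "u \<le> (s + t) / 2" "(s + t) / 2 < v"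
      and split: "riemann_sum \<Xi> S = riemann_sum \<Xi> (S \<inter> {..u}) + \<Xi> u v + riemann_sum \<Xi> (S \<inter> {v..})"
      using is_point_partition_midpoint_split[OF less.prems(1) True] .
    define h where "h = t - s"
    have IH1: "norm (riemann_sum \<Xi> (S \<inter> {..u}) - \<Xi> s u) \<le> sewing_factor \<theta> * M * (u - s) powr \<theta>"
      using less.hyps[OF card_Int_atMost_less[OF less.prems(1)] is_point_partition_restrict(1)[OF less.prems(1)]]
        less.prems uv by simp
    have IH2: "norm (riemann_sum \<Xi> (S \<inter> {v..}) - \<Xi> v t) \<le> sewing_factor \<theta> * M * (t - v) powr \<theta>"
      using less.hyps[OF card_Int_atLeast_less[OF less.prems(1)] is_point_partition_restrict(2)[OF less.prems(1)]]
        less.prems uv by simp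
    have halves: "(u - s) powr \<theta> \<le> (h / 2) powr \<theta>" "(t - v) powr \<theta> \<le> (h / 2) powr \<theta>"
      using uv theta unfolding h_def by (auto intro!: powr_mono2)
    have "(v - s) powr \<theta> \<le> h powr \<theta>" using uv theta unfolding h_def by (auto intro!: powr_mono2)
    then have deltas: "norm (\<Xi> s t - \<Xi> s v - \<Xi> v t) \<le> M * h powr \<theta>"
      "norm (\<Xi> s v - \<Xi> s u - \<Xi> u v) \<le> M * h powr \<theta>"
      using delta[of s v t] delta[of s u v] less.prems uv M unfolding h_def
      by (auto intro: order_trans mult_left_mono)
    have "riemann_sum \<Xi> S - \<Xi> s t = (riemann_sum \<Xi> (S \<inter> {..u}) - \<Xi> s u)
        + (riemann_sum \<Xi> (S \<inter> {v..}) - \<Xi> v t) - (\<Xi> s t - \<Xi> s v - \<Xi> v t) - (\<Xi> s v - \<Xi> s u - \<Xi> u v)"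
      unfolding split by (simp add: algebra_simps)
    then have "norm (riemann_sum \<Xi> S - \<Xi> s t)
        \<le> 2 * (sewing_factor \<theta> * M * (h / 2) powr \<theta>) + 2 * (M * h powr \<theta>)"
      using norm_add_diff_diff_le IH1 IH2 deltas halves
        mult_left_mono[OF halves(1) factor_M_nonneg] mult_left_mono[OF halves(2) factor_M_nonneg]
      by (smt (verit))
    also have "\<dots> = M * h powr \<theta> * (sewing_factor \<theta> * 2 powr (1 - \<theta>) + 2)"
      using True unfolding h_def by (simp add: powr_divide powr_diff algebra_simps)
    finally show ?thesis using sewing_factor(2)[OF theta] unfolding h_def by (simp add: mult_ac)
  qed
qed

lemma riemann_sum_refine_le:
  assumes "is_point_partition S s t" "is_point_partition S' s t" "S \<subseteq> S'" "0 \<le> s" "t \<le> T"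
  shows "norm (riemann_sum \<Xi> S' - riemann_sum \<Xi> S)
    \<le> sewing_factor \<theta> * M * riemann_sum (\<lambda>p q. (q - p) powr \<theta>) S"
  using assms
proof (induction "card S" arbitrary: S S' s t rule: less_induct)
  case less
  note P = is_point_partition_bounds[OF less.prems(1)]
  note P' = is_point_partition_bounds[OF less.prems(2)]
  let ?\<Theta> = "\<lambda>p q. (q - p) powr \<theta>"
  show ?case
  proof (cases "\<exists>u\<in>S. s < u \<and> u < t")
    case True
    then obtain u where u: "u \<in> S" "s < u" "u < t" by blast
    then have "u \<in> S'" using less.prems(3) by auto
    have IH1: "norm (riemann_sum \<Xi> (S' \<inter> {..u}) - riemann_sum \<Xi> (S \<inter> {..u}))
        \<le> sewing_factor \<theta> * M * riemann_sum ?\<Theta> (S \<inter> {..u})"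
      using less.hyps[OF card_Int_atMost_less[OF less.prems(1) u(3)]
          is_point_partition_restrict(1)[OF less.prems(1) u(1)]
          is_point_partition_restrict(1)[OF less.prems(2) \<open>u \<in> S'\<close>]] less.prems u by auto
    have IH2: "norm (riemann_sum \<Xi> (S' \<inter> {u..}) - riemann_sum \<Xi> (S \<inter> {u..}))
        \<le> sewing_factor \<theta> * M * riemann_sum ?\<Theta> (S \<inter> {u..})"
      using less.hyps[OF card_Int_atLeast_less[OF less.prems(1) u(2)]
          is_point_partition_restrict(2)[OF less.prems(1) u(1)]
          is_point_partition_restrict(2)[OF less.prems(2) \<open>u \<in> S'\<close>]] less.prems u by auto
    have "riemann_sum \<Xi> S' - riemann_sum \<Xi> S
        = (riemann_sum \<Xi> (S' \<inter> {..u}) - riemann_sum \<Xi> (S \<inter> {..u}))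
          + (riemann_sum \<Xi> (S' \<inter> {u..}) - riemann_sum \<Xi> (S \<inter> {u..}))"
      using riemann_sum_split[OF P'(4) \<open>u \<in> S'\<close>, of \<Xi>] riemann_sum_split[OF P(4) u(1), of \<Xi>] by simp
    then have "norm (riemann_sum \<Xi> S' - riemann_sum \<Xi> S)
        \<le> sewing_factor \<theta> * M * riemann_sum ?\<Theta> (S \<inter> {..u})
          + sewing_factor \<theta> * M * riemann_sum ?\<Theta> (S \<inter> {u..})"
      using norm_triangle_mono[OF IH1 IH2] by simp
    also have "\<dots> = sewing_factor \<theta> * M * riemann_sum ?\<Theta> S"
      using riemann_sum_split[OF P(4) u(1), of ?\<Theta>] by (simp add: distrib_left)
    finally show ?thesis .
  next
    case False
    then have S: "S = {s, t}" using P by fastforce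
    have "riemann_sum \<Xi> S = \<Xi> s t \<and> riemann_sum ?\<Theta> S = (t - s) powr \<theta>"
    proof (cases "s = t")
      case True
      then show ?thesis using diag less.prems(4,5) unfolding S by simp
    next
      case False
      then have "s < t" using P by auto
      then show ?thesis unfolding S by (simp add: riemann_sum_doubleton)
    qed
    then show ?thesis using riemann_sum_germ_le[OF less.prems(2,4,5)] by simp
  qed
qed

lemma riemann_sums_close:
  assumes "is_point_partition S 0 t" "is_point_partition S' 0 t" "gaps_below S d" "gaps_below S' d" "t \<le> T"
  shows "norm (riemann_sum \<Xi> S - riemann_sum \<Xi> S') \<le> 2 * sewing_factor \<theta> * M * t * d powr (\<theta> - 1)"
proof -
  have U: "is_point_partition (S \<union> S') 0 t"
    using assms(1,2) unfolding is_point_partition_def by (simp add: Min_Un Max_Un)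
  have "norm (riemann_sum \<Xi> (S \<union> S') - riemann_sum \<Xi> R) \<le> sewing_factor \<theta> * M * t * d powr (\<theta> - 1)"
    if "is_point_partition R 0 t" "gaps_below R d" "R \<subseteq> S \<union> S'" for R
  proof -
    have "norm (riemann_sum \<Xi> (S \<union> S') - riemann_sum \<Xi> R)
        \<le> sewing_factor \<theta> * M * riemann_sum (\<lambda>p q. (q - p) powr \<theta>) R"
      by (rule riemann_sum_refine_le[OF that(1) U that(3) order_refl assms(5)])
    also have "\<dots> \<le> sewing_factor \<theta> * M * (d powr (\<theta> - 1) * (t - 0))"
      using riemann_sum_powr_le[OF that(1,2)] theta factor_M_nonneg by (intro mult_left_mono) auto
    finally show ?thesis by (simp add: mult_ac)
  qed
  from this[OF assms(1,3)] this[OF assms(2,4)] show ?thesis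
    using norm_triangle_ineq4[of "riemann_sum \<Xi> (S \<union> S') - riemann_sum \<Xi> S'"
        "riemann_sum \<Xi> (S \<union> S') - riemann_sum \<Xi> S"]
    by simp
qed


lemma riemann_sums_Cauchy:
  assumes "t \<le> T" "e > 0"
  obtains d where "d > 0" "\<And>S S'. is_point_partition S 0 t \<Longrightarrow> is_point_partition S' 0 t \<Longrightarrow>
    gaps_below S d \<Longrightarrow> gaps_below S' d \<Longrightarrow> norm (riemann_sum \<Xi> S - riemann_sum \<Xi> S') < e"
proof -
  obtain d where d: "d > 0" "2 * sewing_factor \<theta> * M * t * d powr (\<theta> - 1) < e"
    using exists_pos_powr_less[of "\<theta> - 1" e] theta assms(2) by auto
  have "norm (riemann_sum \<Xi> S - riemann_sum \<Xi> S') < e"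
    if "is_point_partition S 0 t" "is_point_partition S' 0 t" "gaps_below S d" "gaps_below S' d" for S S'
    using riemann_sums_close[OF that assms(1)] d(2) by linarith
  with d(1) show thesis using that by blast
qed

lemma has_psum_integral_germ:
  assumes "0 \<le> t" "t \<le> T"
  obtains I where "has_psum_integral \<Xi> t I"
proof -
  define X where "X n = riemann_sum \<Xi> (uniform_points 0 t n)" for n
  note fine_eventually = eventually_gaps_below_uniform_points[OF assms(1), unfolded eventually_sequentially]
  have "Cauchy X"
  proof (rule CauchyI)
    fix e :: real assume "e > 0"
    obtain d where d: "d > 0" "\<And>S S'. is_point_partition S 0 t \<Longrightarrow> is_point_partition S' 0 t \<Longrightarrow>
        gaps_below S d \<Longrightarrow> gaps_below S' d \<Longrightarrow> norm (riemann_sum \<Xi> S - riemann_sum \<Xi> S') < e"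
      using riemann_sums_Cauchy[OF assms(2) \<open>e > 0\<close>] by blast
    then obtain N where "\<And>n. n \<ge> N \<Longrightarrow> gaps_below (uniform_points 0 t n) d" using fine_eventually by blast
    then show "\<exists>N. \<forall>m\<ge>N. \<forall>n\<ge>N. norm (X m - X n) < e"
      unfolding X_def using d(2) uniform_points(1)[OF assms(1)] by blast
  qed
  then obtain L where L: "X \<longlonglongrightarrow> L" using Cauchy_convergent_iff convergent_def by blast
  have "has_psum_integral \<Xi> t L"
    unfolding has_psum_integral_iff
  proof (intro allI impI)
    fix e :: real assume "e > 0"
    then obtain d where d: "d > 0" "\<And>S S'. is_point_partition S 0 t \<Longrightarrow> is_point_partition S' 0 t \<Longrightarrow>
        gaps_below S d \<Longrightarrow> gaps_below S' d \<Longrightarrow> norm (riemann_sum \<Xi> S - riemann_sum \<Xi> S') < e / 2"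
      using riemann_sums_Cauchy[OF assms(2), of "e / 2"] by auto
    obtain N where N: "\<And>n. n \<ge> N \<Longrightarrow> gaps_below (uniform_points 0 t n) d" using fine_eventually d(1) by blast
    obtain N' where N': "\<And>n. n \<ge> N' \<Longrightarrow> norm (X n - L) < e / 2"
      using L \<open>e > 0\<close> unfolding LIMSEQ_iff by (meson half_gt_zero)
    have "norm (riemann_sum \<Xi> S - L) < e" if "is_point_partition S 0 t" "gaps_below S d" for S
      using d(2)[OF that(1) uniform_points(1)[OF assms(1)] that(2) N[of "max N N'"]] N'[of "max N N'"]
        norm_diff_triangle_less[of "riemann_sum \<Xi> S" "X (max N N')" "e / 2" L "e / 2"]
      unfolding X_def by simp
    then show "\<exists>d>0. \<forall>S. is_point_partition S 0 t \<and> gaps_below S d \<longrightarrow> norm (riemann_sum \<Xi> S - L) < e"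
      using d(1) by blast
  qed
  then show thesis ..
qed

lemma psum_integral_increment_le:
  assumes "0 \<le> s" "s \<le> t" "t \<le> T"
  shows "norm (psum_integral \<Xi> t - psum_integral \<Xi> s - \<Xi> s t) \<le> sewing_factor \<theta> * M * (t - s) powr \<theta>"
proof -
  obtain Is It where Is: "has_psum_integral \<Xi> s Is" and It: "has_psum_integral \<Xi> t It"
    using has_psum_integral_germ assms by (meson order_trans)
  have "norm (It - Is - \<Xi> s t) \<le> sewing_factor \<theta> * M * (t - s) powr \<theta> + e" if e: "e > 0" for e
  proof -
    obtain S where S: "is_point_partition S s t" "norm (It - Is - riemann_sum \<Xi> S) < e"
      using has_psum_integral_increment_approx[OF Is It assms(1,2) e] .
    then show ?thesis
      using riemann_sum_germ_le[OF S(1) assms(1,3)]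
        norm_triangle_ineq[of "It - Is - riemann_sum \<Xi> S" "riemann_sum \<Xi> S - \<Xi> s t"] by simp
  qed
  then have "norm (It - Is - \<Xi> s t) \<le> sewing_factor \<theta> * M * (t - s) powr \<theta>"
    by (rule field_le_epsilon)
  then show ?thesis
    using psum_integral_eqI[OF Is assms(1)] psum_integral_eqI[OF It] assms by simp
qed

lemma psum_integral_increment_hoelder:
  assumes "0 \<le> a" "a \<le> \<theta>" "0 \<le> s" "s \<le> t" "t \<le> T" "norm (\<Xi> s t) \<le> B * (t - s) powr a"
  shows "norm (psum_integral \<Xi> t - psum_integral \<Xi> s)
    \<le> (B + sewing_factor \<theta> * M * T powr (\<theta> - a)) * (t - s) powr a"
proof -
  have "norm (psum_integral \<Xi> t - psum_integral \<Xi> s)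
      \<le> norm (psum_integral \<Xi> t - psum_integral \<Xi> s - \<Xi> s t) + norm (\<Xi> s t)"
    using norm_triangle_sub[of "psum_integral \<Xi> t - psum_integral \<Xi> s" "\<Xi> s t"] by simp
  also have "\<dots> \<le> sewing_factor \<theta> * M * (t - s) powr \<theta> + B * (t - s) powr a"
    using psum_integral_increment_le[OF assms(3-5)] assms(6) by (rule add_mono)
  also have "sewing_factor \<theta> * M * (t - s) powr \<theta> \<le> sewing_factor \<theta> * M * (T powr (\<theta> - a) * (t - s) powr a)"
    using powr_le_powr_scaled[of "t - s" T a \<theta>] assms factor_M_nonneg by (intro mult_left_mono) auto
  finally show ?thesis by (simp add: algebra_simps)
qed

end

definition sewing_const :: "real \<Rightarrow> real \<Rightarrow> real \<Rightarrow> real" where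
  "sewing_const T a \<theta> = (1 + T powr a) * (1 + sewing_factor \<theta> * T powr (\<theta> - a))"

lemma sewing_const_nonneg:
  assumes "\<theta> > 1"
  shows "sewing_const T a \<theta> \<ge> 0"
  using sewing_factor(1)[OF assms] unfolding sewing_const_def by (intro mult_nonneg_nonneg) auto

theorem sewing:
  fixes \<Xi> :: "real \<Rightarrow> real \<Rightarrow> 'w::banach"
  assumes "T > 0" "\<theta> > 1" "M \<ge> 0" "B \<ge> 0" "0 \<le> a" "a \<le> \<theta>"
    and germ: "\<And>s t. 0 \<le> s \<Longrightarrow> s \<le> t \<Longrightarrow> t \<le> T \<Longrightarrow> norm (\<Xi> s t) \<le> B * (t - s) powr a"
    and delta: "\<And>s u t. 0 \<le> s \<Longrightarrow> s \<le> u \<Longrightarrow> u \<le> t \<Longrightarrow> t \<le> T \<Longrightarrow>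
        norm (\<Xi> s t - \<Xi> s u - \<Xi> u t) \<le> M * (t - s) powr \<theta>"
  shows "\<And>t. 0 \<le> t \<Longrightarrow> t \<le> T \<Longrightarrow> has_psum_integral \<Xi> t (psum_integral \<Xi> t)"
    "hoelder_path a T (psum_integral \<Xi>)"
    "hoelder_norm a T (psum_integral \<Xi>) \<le> sewing_const T a \<theta> * (B + M)"
proof -
  interpret sewing_germ T \<theta> M \<Xi>
    using assms germ[of s s for s] by unfold_locales auto
  show "has_psum_integral \<Xi> t (psum_integral \<Xi> t)" if t: "0 \<le> t" "t \<le> T" for t
  proof -
    obtain I where I: "has_psum_integral \<Xi> t I" using has_psum_integral_germ[OF t] by blast
    then show ?thesis using psum_integral_eqI[OF I t(1)] by simp
  qed
  define C where "C = B + sewing_factor \<theta> * M * T powr (\<theta> - a)"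
  have C: "C \<ge> 0" unfolding C_def using assms factor_M_nonneg by simp
  have increment: "norm (psum_integral \<Xi> t - psum_integral \<Xi> s) \<le> C * (t - s) powr a"
    if "0 \<le> s" "s \<le> t" "t \<le> T" for s t
    unfolding C_def using psum_integral_increment_hoelder[OF assms(5,6) that germ[OF that]] .
  have "psum_integral \<Xi> 0 = 0" using psum_integral_eqI[OF has_psum_integral_0] by simp
  have sup: "norm (psum_integral \<Xi> t) \<le> C * T powr a" if "0 \<le> t" "t \<le> T" for t
  proof -
    have "norm (psum_integral \<Xi> t) \<le> C * (t - 0) powr a"
      using increment[of 0 t] that \<open>psum_integral \<Xi> 0 = 0\<close> by simp
    also have "\<dots> \<le> C * T powr a" using that C assms(5) by (intro mult_left_mono powr_mono2) auto
    finally show ?thesis .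
  qed
  have quot: "norm (psum_integral \<Xi> t - psum_integral \<Xi> s) \<le> C * (t - s) powr a"
    if "0 \<le> s" "s < t" "t \<le> T" for s t
    using increment that by simp
  note H = hoelder_path_boundsI[OF assms(1) sup quot]
  show "hoelder_path a T (psum_integral \<Xi>)" by (rule H(1))
  have "0 \<le> sewing_factor \<theta> * T powr (\<theta> - a) * B"
    using assms(4) sewing_factor(1)[OF assms(2)] by simp
  then have "C \<le> (1 + sewing_factor \<theta> * T powr (\<theta> - a)) * (B + M)"
    unfolding C_def using assms(3) by (simp add: algebra_simps)
  then have "(1 + T powr a) * C \<le> sewing_const T a \<theta> * (B + M)"
    unfolding sewing_const_def by (simp add: mult_left_mono mult.assoc)
  then show "hoelder_norm a T (psum_integral \<Xi>) \<le> sewing_const T a \<theta> * (B + M)"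
    using H(2) by (simp add: algebra_simps)
qed

section \<open>Taylor remainder of a map with Hoelder derivative\<close>

lemma differentiable_bound_blinfun:
  fixes F :: "'v::real_normed_vector \<Rightarrow> 'w::real_normed_vector"
  assumes "\<And>z. z \<in> closed_segment x y \<Longrightarrow> (F has_derivative blinfun_apply (L z)) (at z)"
    and "\<And>z. z \<in> closed_segment x y \<Longrightarrow> norm (L z - L0) \<le> K"
  shows "norm (F y - F x - L0 (y - x)) \<le> K * norm (y - x)"
proof -
  define G where "G z = F z - L0 z" for z
  have "(G has_derivative blinfun_apply (L z - L0)) (at z within closed_segment x y)"
    if "z \<in> closed_segment x y" for z
  proof -
    have "(G has_derivative (\<lambda>v. L z v - L0 v)) (at z)"
      unfolding G_def by (intro has_derivative_diff assms(1)[OF that]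
          bounded_linear.has_derivative[OF blinfun.bounded_linear_right] has_derivative_ident)
    moreover have "blinfun_apply (L z - L0) = (\<lambda>v. L z v - L0 v)"
      by (rule ext) (simp add: blinfun.diff_left)
    ultimately show ?thesis by (simp add: has_derivative_at_withinI)
  qed
  then have "norm (G y - G x) \<le> K * norm (y - x)"
    by (rule differentiable_bound[OF convex_closed_segment])
      (use assms(2) in \<open>auto simp: norm_blinfun.rep_eq[symmetric]\<close>)
  then show ?thesis unfolding G_def by (simp add: blinfun.diff_right algebra_simps)
qed

lemma norm_translate_segment_le:
  fixes p x y w :: "'v::real_normed_vector"
  assumes "norm (p + x) \<le> R" "norm (p + y) \<le> R" "w \<in> closed_segment x y"
  shows "norm (p + w) \<le> R"
proof -
  have "p + w \<in> closed_segment (p + x) (p + y)"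
    using assms(3) closed_segment_translation[of p x y] by auto
  also have "\<dots> \<subseteq> cball 0 R" using assms(1,2) by (intro closed_segment_subset) auto
  finally show ?thesis by simp
qed

locale hoelder_derivative =
  fixes f :: "'v::real_normed_vector \<Rightarrow> 'w::real_normed_vector" and Df :: "'v \<Rightarrow> ('v \<Rightarrow>\<^sub>L 'w)"
    and \<kappa> R b :: real
  assumes deriv: "\<And>z. (f has_derivative blinfun_apply (Df z)) (at z)"
    and hoelder: "\<And>z z'. norm z \<le> R \<Longrightarrow> norm z' \<le> R \<Longrightarrow> norm (Df z - Df z') \<le> \<kappa> * norm (z - z') powr b"
    and kappa: "\<kappa> \<ge> 0" and b: "b > 0"
begin

definition taylor_rem :: "'v \<Rightarrow> 'v \<Rightarrow> 'w" where
  "taylor_rem p q = f (p + q) - f p - Df p q"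

lemma deriv_shift: "((\<lambda>w. f (p + w)) has_derivative blinfun_apply (Df (p + w))) (at w)"
  using has_derivative_compose[OF has_derivative_add[OF has_derivative_const has_derivative_ident] deriv]
  by simp

lemma norm_taylor_rem_le:
  assumes "norm p \<le> R" "norm (p + q) \<le> R"
  shows "norm (taylor_rem p q) \<le> \<kappa> * norm q powr b * norm q"
proof -
  have "norm (f (p + q) - f (p + 0) - Df p (q - 0)) \<le> \<kappa> * norm q powr b * norm (q - 0)"
  proof (rule differentiable_bound_blinfun[OF deriv_shift])
    fix w assume w: "w \<in> closed_segment 0 q"
    have "norm (p + w) \<le> R" using norm_translate_segment_le[of p 0 R q w] assms w by simp
    moreover have "norm w \<le> norm q" using segment_bound(1)[OF w] by simp
    moreover have "\<kappa> * norm w powr b \<le> \<kappa> * norm q powr b"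
      using \<open>norm w \<le> norm q\<close> kappa b by (intro mult_left_mono powr_mono2) auto
    ultimately show "norm (Df (p + w) - Df p) \<le> \<kappa> * norm q powr b"
      using hoelder[OF _ assms(1), of "p + w"] by simp
  qed
  then show ?thesis unfolding taylor_rem_def by simp
qed

lemma norm_taylor_rem_diff_base_le:
  assumes "norm p \<le> R" "norm (p + q) \<le> R" "norm p' \<le> R" "norm (p' + q) \<le> R"
  shows "norm (taylor_rem p q - taylor_rem p' q) \<le> 2 * \<kappa> * norm (p - p') powr b * norm q"
proof -
  have "norm ((f (p + q) - f (p' + q)) - (f (p + 0) - f (p' + 0)) - (Df p - Df p') (q - 0))
      \<le> 2 * \<kappa> * norm (p - p') powr b * norm (q - 0)"
  proof (rule differentiable_bound_blinfun)
    fix w assume w: "w \<in> closed_segment 0 q"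
    show "((\<lambda>w. f (p + w) - f (p' + w)) has_derivative blinfun_apply (Df (p + w) - Df (p' + w))) (at w)"
    proof -
      have "blinfun_apply (Df (p + w) - Df (p' + w)) = (\<lambda>v. Df (p + w) v - Df (p' + w) v)"
        by (rule ext) (simp add: blinfun.diff_left)
      then show ?thesis using has_derivative_diff[OF deriv_shift[of p w] deriv_shift[of p' w]] by simp
    qed
    have "norm (p + w) \<le> R" "norm (p' + w) \<le> R"
      using norm_translate_segment_le[OF _ _ w] assms by simp_all
    then have "norm (Df (p + w) - Df (p' + w)) + norm (Df p - Df p') \<le> 2 * \<kappa> * norm (p - p') powr b"
      using hoelder[of "p + w" "p' + w"] hoelder[OF assms(1,3)] by simp
    then show "norm (Df (p + w) - Df (p' + w) - (Df p - Df p')) \<le> 2 * \<kappa> * norm (p - p') powr b"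
      using norm_triangle_ineq4 order_trans by blast
  qed
  then show ?thesis unfolding taylor_rem_def by (simp add: blinfun.diff_left algebra_simps)
qed

lemma norm_taylor_rem_diff_incr_le:
  assumes "norm p \<le> R" "norm (p + q) \<le> R" "norm (p + q') \<le> R" "norm q \<le> m" "norm q' \<le> m"
  shows "norm (taylor_rem p q - taylor_rem p q') \<le> \<kappa> * m powr b * norm (q - q')"
proof -
  have "norm (f (p + q) - f (p + q') - Df p (q - q')) \<le> \<kappa> * m powr b * norm (q - q')"
  proof (rule differentiable_bound_blinfun[OF deriv_shift])
    fix w assume w: "w \<in> closed_segment q' q"
    have "norm (p + w) \<le> R" using norm_translate_segment_le[OF assms(3,2) w] .
    moreover have "norm w \<le> m" using norm_translate_segment_le[of 0 q' m q w] assms(4,5) w by simp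
    moreover have "\<kappa> * norm w powr b \<le> \<kappa> * m powr b"
      using calculation(2) kappa b by (intro mult_left_mono powr_mono2) auto
    ultimately show "norm (Df (p + w) - Df p) \<le> \<kappa> * m powr b"
      using hoelder[OF _ assms(1), of "p + w"] by simp
  qed
  then show ?thesis unfolding taylor_rem_def by (simp add: blinfun.diff_right algebra_simps)
qed

lemma norm_taylor_rem_diff_base_interpolated:
  assumes "norm p \<le> R" "norm (p + q) \<le> R" "norm p' \<le> R" "norm (p' + q) \<le> R" "0 \<le> \<rho>" "\<rho> \<le> b"
  shows "norm (taylor_rem p q - taylor_rem p' q)
    \<le> 2 * \<kappa> * (norm q * norm q powr \<rho>) * norm (p - p') powr (b - \<rho>)"
proof -
  let ?D = "norm (taylor_rem p q - taylor_rem p' q)"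
  have "?D \<le> norm (taylor_rem p q) + norm (taylor_rem p' q)" by (rule norm_triangle_ineq4)
  also have "\<dots> \<le> 2 * \<kappa> * norm q * norm q powr b"
    using norm_taylor_rem_le[OF assms(1,2)] norm_taylor_rem_le[OF assms(3,4)] by (simp add: mult_ac)
  finally have "?D \<le> 2 * \<kappa> * norm q * norm q powr b" .
  moreover have "?D \<le> 2 * \<kappa> * norm q * norm (p - p') powr b"
    using norm_taylor_rem_diff_base_le[OF assms(1-4)] by (simp add: mult_ac)
  ultimately have "?D \<le> 2 * \<kappa> * norm q * ((norm q powr b) powr (\<rho> / b) * (norm (p - p') powr b) powr (1 - \<rho> / b))"
    using kappa assms(5,6) b by (intro le_powr_interpolation) auto
  also have "(norm q powr b) powr (\<rho> / b) = norm q powr \<rho>" using b by (simp add: powr_powr)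
  also have "(norm (p - p') powr b) powr (1 - \<rho> / b) = norm (p - p') powr (b - \<rho>)"
    using b by (simp add: powr_powr algebra_simps)
  finally show ?thesis by (simp add: mult_ac)
qed

end

section \<open>The integral along a fixed Hoelder path\<close>

lemma field_hoelder_locE:
  fixes A :: "real \<Rightarrow> 'v::real_normed_vector \<Rightarrow> 'w::real_normed_vector"
  assumes "field_hoelder_loc T a b A DA" "R > 0" "T > 0"
  obtains C where "C \<ge> 0"
    "\<And>s t z. 0 \<le> s \<Longrightarrow> s \<le> t \<Longrightarrow> t \<le> T \<Longrightarrow> norm z \<le> R \<Longrightarrow>
      norm (A t z - A s z) \<le> C * (t - s) powr a"
    "\<And>s t z. 0 \<le> s \<Longrightarrow> s \<le> t \<Longrightarrow> t \<le> T \<Longrightarrow> norm z \<le> R \<Longrightarrow>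
      norm (DA t z - DA s z) \<le> C * (t - s) powr a"
    "\<And>s t z z'. 0 \<le> s \<Longrightarrow> s \<le> t \<Longrightarrow> t \<le> T \<Longrightarrow> norm z \<le> R \<Longrightarrow> norm z' \<le> R \<Longrightarrow>
      norm ((A t z - A s z) - (A t z' - A s z')) \<le> C * (t - s) powr a * norm (z - z') powr b"
    "\<And>s t z z'. 0 \<le> s \<Longrightarrow> s \<le> t \<Longrightarrow> t \<le> T \<Longrightarrow> norm z \<le> R \<Longrightarrow> norm z' \<le> R \<Longrightarrow>
      norm ((DA t z - DA s z) - (DA t z' - DA s z')) \<le> C * (t - s) powr a * norm (z - z') powr b"
proof -
  obtain C where C: "\<forall>s t. 0 \<le> s \<and> s < t \<and> t \<le> T \<longrightarrow>
        (\<forall>z z'. norm z \<le> R \<and> norm z' \<le> R \<and> z \<noteq> z' \<longrightarrow>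
            norm ((A t z - A s z) - (A t z' - A s z')) \<le> C * (t - s) powr a * norm (z - z') powr b
          \<and> norm ((DA t z - DA s z) - (DA t z' - DA s z')) \<le> C * (t - s) powr a * norm (z - z') powr b)
      \<and> (\<forall>z. norm z \<le> R \<longrightarrow>
            norm (A t z - A s z) \<le> C * (t - s) powr a \<and> norm (DA t z - DA s z) \<le> C * (t - s) powr a)"
    using mp[OF conjunct2[OF conjunct2[OF assms(1)[unfolded field_hoelder_loc_def]], THEN spec[of _ R]] assms(2)]
    by (elim exE)
  have C_st: "(\<forall>z z'. norm z \<le> R \<and> norm z' \<le> R \<and> z \<noteq> z' \<longrightarrow>
            norm ((A t z - A s z) - (A t z' - A s z')) \<le> C * (t - s) powr a * norm (z - z') powr b
          \<and> norm ((DA t z - DA s z) - (DA t z' - DA s z')) \<le> C * (t - s) powr a * norm (z - z') powr b)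
      \<and> (\<forall>z. norm z \<le> R \<longrightarrow>
            norm (A t z - A s z) \<le> C * (t - s) powr a \<and> norm (DA t z - DA s z) \<le> C * (t - s) powr a)"
    if "0 \<le> s" "s < t" "t \<le> T" for s t
    using mp[OF spec[OF spec[OF C, of s], of t]] that by blast
  have incr: "norm (A t z - A s z) \<le> C * (t - s) powr a \<and> norm (DA t z - DA s z) \<le> C * (t - s) powr a"
    if "0 \<le> s" "s \<le> t" "t \<le> T" "norm z \<le> R" for s t z
  proof (cases "s = t")
    case False
    then show ?thesis using conjunct2[OF C_st, rule_format] that by simp
  qed simp
  have diff: "norm ((A t z - A s z) - (A t z' - A s z')) \<le> C * (t - s) powr a * norm (z - z') powr b
      \<and> norm ((DA t z - DA s z) - (DA t z' - DA s z')) \<le> C * (t - s) powr a * norm (z - z') powr b"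
    if "0 \<le> s" "s \<le> t" "t \<le> T" "norm z \<le> R" "norm z' \<le> R" for s t z z'
  proof (cases "s = t \<or> z = z'")
    case False
    then show ?thesis using conjunct1[OF C_st, rule_format] that by simp
  qed auto
  have "0 \<le> C * T powr a"
    using incr[of 0 T 0] assms(2,3) norm_ge_zero[of "A T 0 - A 0 0"] by (simp, linarith)
  then have "C \<ge> 0" using assms(3) by (simp add: zero_le_mult_iff)
  then show thesis using that incr diff by blast
qed

(* R bounds x_s + y_t for every perturbation y of Hoelder norm at most 1. *)
locale field_along_path =
  fixes T a b g R C :: real
    and A :: "real \<Rightarrow> 'v::banach \<Rightarrow> 'w::banach" and DA :: "real \<Rightarrow> 'v \<Rightarrow> ('v \<Rightarrow>\<^sub>L 'w)"
    and x :: "real \<Rightarrow> 'v"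
  assumes T: "T > 0" and a: "0 < a" "a < 1" and b: "0 < b" "b < 1" and g: "0 < g"
    and abg: "a + b * g > 1"
    and deriv: "\<And>t z. 0 \<le> t \<Longrightarrow> t \<le> T \<Longrightarrow> (A t has_derivative blinfun_apply (DA t z)) (at z)"
    and x_hoelder: "hoelder_path g T x"
    and R: "\<And>t. 0 \<le> t \<Longrightarrow> t \<le> T \<Longrightarrow> norm (x t) + 1 \<le> R"
    and C: "C \<ge> 0"
    and A_incr: "\<And>s t z. 0 \<le> s \<Longrightarrow> s \<le> t \<Longrightarrow> t \<le> T \<Longrightarrow> norm z \<le> R \<Longrightarrow>
      norm (A t z - A s z) \<le> C * (t - s) powr a"
    and DA_incr: "\<And>s t z. 0 \<le> s \<Longrightarrow> s \<le> t \<Longrightarrow> t \<le> T \<Longrightarrow> norm z \<le> R \<Longrightarrow>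
      norm (DA t z - DA s z) \<le> C * (t - s) powr a"
    and A_hoelder: "\<And>s t z z'. 0 \<le> s \<Longrightarrow> s \<le> t \<Longrightarrow> t \<le> T \<Longrightarrow> norm z \<le> R \<Longrightarrow> norm z' \<le> R \<Longrightarrow>
      norm ((A t z - A s z) - (A t z' - A s z')) \<le> C * (t - s) powr a * norm (z - z') powr b"
    and DA_hoelder: "\<And>s t z z'. 0 \<le> s \<Longrightarrow> s \<le> t \<Longrightarrow> t \<le> T \<Longrightarrow> norm z \<le> R \<Longrightarrow> norm z' \<le> R \<Longrightarrow>
      norm ((DA t z - DA s z) - (DA t z' - DA s z')) \<le> C * (t - s) powr a * norm (z - z') powr b"
begin

abbreviation "X \<equiv> hoelder_norm g T x"

(* theta lies strictly between 1 and a + bg; rho is chosen so that a + g (b - rho) = theta,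
   which leaves a factor |y|^rho to spare in the remainder estimate. *)
definition \<theta> :: real where "\<theta> = (1 + a + b * g) / 2"
definition \<rho> :: real where "\<rho> = (a + b * g - 1) / (2 * g)"

lemma exponents:
  shows "\<theta> > 1" "a \<le> \<theta>" "\<theta> \<le> a + g * b" "\<theta> \<le> a + g" "\<rho> > 0" "\<rho> < b" "a + g * (b - \<rho>) = \<theta>"
proof -
  show "\<theta> > 1" "a \<le> \<theta>" "\<theta> \<le> a + g * b" unfolding \<theta>_def using abg a by (auto simp: algebra_simps)
  have "b * g < g" using b g by simp
  then show "\<theta> \<le> a + g" unfolding \<theta>_def using abg by (auto simp: algebra_simps)
  show "\<rho> > 0" unfolding \<rho>_def using abg g by simp
  have "a + b * g - 1 < 2 * g * b" using a b g by (simp add: algebra_simps) (smt (verit) mult_pos_pos)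
  then show "\<rho> < b" unfolding \<rho>_def using g by (simp add: divide_less_eq algebra_simps)
  show "a + g * (b - \<rho>) = \<theta>" unfolding \<rho>_def \<theta>_def using g by (simp add: field_simps)
qed

lemma X_nonneg: "X \<ge> 0"
  using hoelder_norm_nonneg[OF x_hoelder T] .

lemma x_bounds:
  assumes "0 \<le> s" "s \<le> u" "u \<le> T"
  shows "norm (x s) \<le> R" "norm (x s - x u) \<le> X * (u - s) powr g"
  using R[of s] norm_diff_le_hoelder_norm[OF x_hoelder T assms] assms
  by (simp_all add: norm_minus_commute)

lemma increment_hoelder_derivative:
  assumes "0 \<le> u" "u \<le> t" "t \<le> T"
  shows "hoelder_derivative (\<lambda>z. A t z - A u z) (\<lambda>z. DA t z - DA u z) (C * (t - u) powr a) R b"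
proof
  fix z :: 'v
  show "((\<lambda>z. A t z - A u z) has_derivative blinfun_apply (DA t z - DA u z)) (at z)"
  proof -
    have "blinfun_apply (DA t z - DA u z) = (\<lambda>v. DA t z v - DA u z v)"
      by (rule ext) (simp add: blinfun.diff_left)
    then show ?thesis using has_derivative_diff[OF deriv[of t z] deriv[of u z]] assms by simp
  qed
qed (use DA_hoelder[of u t] assms C b in auto)

definition germ_nl :: "real \<Rightarrow> real \<Rightarrow> 'w" where
  "germ_nl s t = A t (x s) - A s (x s)"

definition germ_lin :: "(real \<Rightarrow> 'v) \<Rightarrow> real \<Rightarrow> real \<Rightarrow> 'w" where
  "germ_lin y s t = (DA t (x s) - DA s (x s)) (y s)"

definition germ_rem :: "(real \<Rightarrow> 'v) \<Rightarrow> real \<Rightarrow> real \<Rightarrow> 'w" where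
  "germ_rem y s t = (A t (x s + y s) - A s (x s + y s)) - germ_nl s t - germ_lin y s t"

lemma nl_int_eq: "nl_int A x = psum_integral germ_nl"
  unfolding nl_int_def germ_nl_def ..

lemma lin_int_eq: "lin_int DA x y = psum_integral (germ_lin y)"
  unfolding lin_int_def germ_lin_def ..

lemma germ_nl_delta:
  assumes "0 \<le> s" "s \<le> u" "u \<le> t" "t \<le> T"
  shows "norm (germ_nl s t - germ_nl s u - germ_nl u t) \<le> C * X powr b * T powr (a + g * b - \<theta>) * (t - s) powr \<theta>"
proof -
  have "germ_nl s t - germ_nl s u - germ_nl u t = (A t (x s) - A u (x s)) - (A t (x u) - A u (x u))"
    unfolding germ_nl_def by (simp add: algebra_simps)
  then have "norm (germ_nl s t - germ_nl s u - germ_nl u t) \<le> C * ((t - u) powr a * norm (x s - x u) powr b)"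
    using A_hoelder[of u t "x s" "x u"] x_bounds[of s u] x_bounds[of u t] assms by (simp add: mult.assoc)
  also have "\<dots> \<le> C * (X powr b * T powr (a + g * b - \<theta>) * (t - s) powr \<theta>)"
    using hoelder_product_le[OF assms norm_ge_zero x_bounds(2)[of s u] X_nonneg a(1) g b(1)]
      exponents(1,3) assms C by (intro mult_left_mono) simp_all
  finally show ?thesis by (simp add: mult_ac)
qed

lemma nl_int_sewing:
  shows "\<And>t. 0 \<le> t \<Longrightarrow> t \<le> T \<Longrightarrow> has_psum_integral germ_nl t (nl_int A x t)"
    "hoelder_path a T (nl_int A x)"
proof -
  have "norm (germ_nl s t) \<le> C * (t - s) powr a" if "0 \<le> s" "s \<le> t" "t \<le> T" for s t
    unfolding germ_nl_def using A_incr[OF that x_bounds(1)[of s t]] that by simp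
  note S = sewing[OF T exponents(1) _ C less_imp_le[OF a(1)] exponents(2) this germ_nl_delta]
  show "\<And>t. 0 \<le> t \<Longrightarrow> t \<le> T \<Longrightarrow> has_psum_integral germ_nl t (nl_int A x t)"
    "hoelder_path a T (nl_int A x)"
    using S(1,2) C X_nonneg unfolding nl_int_eq by auto
qed

lemma germ_lin_delta:
  assumes y: "hoelder_path g T y" and st: "0 \<le> s" "s \<le> u" "u \<le> t" "t \<le> T"
  defines "N \<equiv> hoelder_norm g T y"
  shows "norm (germ_lin y s t - germ_lin y s u - germ_lin y u t)
    \<le> C * N * (X powr b * T powr (a + g * b - \<theta>) + T powr (a + g - \<theta>)) * (t - s) powr \<theta>"
proof -
  have N: "N \<ge> 0" "norm (y s) \<le> N" "norm (y s - y u) \<le> N * (u - s) powr g"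
    unfolding N_def using hoelder_norm_nonneg[OF y T] norm_le_hoelder_norm[OF y T] st
      norm_diff_le_hoelder_norm[OF y T, of s u] by (simp_all add: norm_minus_commute)
  let ?D1 = "((DA t (x s) - DA u (x s)) - (DA t (x u) - DA u (x u))) (y s)"
  let ?D2 = "(DA t (x u) - DA u (x u)) (y s - y u)"
  have "germ_lin y s t - germ_lin y s u - germ_lin y u t = ?D1 + ?D2"
    unfolding germ_lin_def by (simp add: blinfun.diff_left blinfun.diff_right blinfun.add_left algebra_simps)
  then have "norm (germ_lin y s t - germ_lin y s u - germ_lin y u t) \<le> norm ?D1 + norm ?D2"
    by (simp add: norm_triangle_ineq)
  also have "norm ?D1 \<le> C * N * ((t - u) powr a * norm (x s - x u) powr b)"
    using order_trans[OF norm_blinfun mult_mono[OF DA_hoelder[of u t "x s" "x u"] N(2)]]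
      x_bounds[of s u] x_bounds[of u t] st C by (simp add: mult_ac)
  also have "norm ?D2 \<le> C * ((t - u) powr a * norm (y s - y u))"
    using order_trans[OF norm_blinfun mult_right_mono[OF DA_incr[of u t "x u"]], of "y s - y u"]
      x_bounds[of u t] st by (simp add: mult_ac)
  also have "C * N * ((t - u) powr a * norm (x s - x u) powr b) + C * ((t - u) powr a * norm (y s - y u))
      \<le> C * N * (X powr b * T powr (a + g * b - \<theta>) * (t - s) powr \<theta>)
        + C * (N * T powr (a + g - \<theta>) * (t - s) powr \<theta>)"
  proof (intro add_mono mult_left_mono)
    show "(t - u) powr a * norm (x s - x u) powr b \<le> X powr b * T powr (a + g * b - \<theta>) * (t - s) powr \<theta>"
      using hoelder_product_le[OF st norm_ge_zero x_bounds(2)[of s u] X_nonneg a(1) g b(1)] exponents st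
      by simp
    show "(t - u) powr a * norm (y s - y u) \<le> N * T powr (a + g - \<theta>) * (t - s) powr \<theta>"
      using hoelder_product_le[OF st norm_ge_zero N(3) N(1) a(1) g, of 1 \<theta>] exponents N(1) by simp
  qed (use C N(1) in simp_all)
  finally show ?thesis by (simp add: algebra_simps)
qed

definition lin_const :: real where
  "lin_const = sewing_const T a \<theta> * C * (1 + X powr b * T powr (a + g * b - \<theta>) + T powr (a + g - \<theta>))"

lemma lin_int_sewing:
  assumes y: "hoelder_path g T y"
  shows "\<And>t. 0 \<le> t \<Longrightarrow> t \<le> T \<Longrightarrow> has_psum_integral (germ_lin y) t (lin_int DA x y t)"
    "hoelder_path a T (lin_int DA x y)"
    "hoelder_norm a T (lin_int DA x y) \<le> lin_const * hoelder_norm g T y"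
proof -
  define N where "N = hoelder_norm g T y"
  have N: "N \<ge> 0" unfolding N_def using hoelder_norm_nonneg[OF y T] .
  have "norm (germ_lin y s t) \<le> C * N * (t - s) powr a" if "0 \<le> s" "s \<le> t" "t \<le> T" for s t
  proof -
    have "norm (germ_lin y s t) \<le> norm (DA t (x s) - DA s (x s)) * norm (y s)"
      unfolding germ_lin_def by (rule norm_blinfun)
    also have "\<dots> \<le> C * (t - s) powr a * N"
      using DA_incr[OF that x_bounds(1)[of s t]] norm_le_hoelder_norm[OF y T, of s] that C
      unfolding N_def by (intro mult_mono) auto
    finally show ?thesis by (simp add: mult_ac)
  qed
  note S = sewing[OF T exponents(1) _ _ less_imp_le[OF a(1)] exponents(2) this germ_lin_delta[OF y]]
  show "\<And>t. 0 \<le> t \<Longrightarrow> t \<le> T \<Longrightarrow> has_psum_integral (germ_lin y) t (lin_int DA x y t)"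
    "hoelder_path a T (lin_int DA x y)"
    using S(1,2) C N X_nonneg unfolding lin_int_eq N_def by auto
  have "hoelder_norm a T (lin_int DA x y)
      \<le> sewing_const T a \<theta> * (C * N + C * N * (X powr b * T powr (a + g * b - \<theta>) + T powr (a + g - \<theta>)))"
    using S(3) C N X_nonneg unfolding lin_int_eq N_def by auto
  then show "hoelder_norm a T (lin_int DA x y) \<le> lin_const * hoelder_norm g T y"
    unfolding lin_const_def N_def by (simp add: algebra_simps)
qed

lemma lin_int_linear:
  assumes "hoelder_path g T y" "hoelder_path g T z" "0 \<le> t" "t \<le> T"
  shows "lin_int DA x (\<lambda>s. c *\<^sub>R y s + d *\<^sub>R z s) t = c *\<^sub>R lin_int DA x y t + d *\<^sub>R lin_int DA x z t"
proof -
  have "has_psum_integral (\<lambda>u v. c *\<^sub>R germ_lin y u v + d *\<^sub>R germ_lin z u v) t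
      (c *\<^sub>R lin_int DA x y t + d *\<^sub>R lin_int DA x z t)"
    using lin_int_sewing(1)[OF assms(1) assms(3,4)] lin_int_sewing(1)[OF assms(2) assms(3,4)]
    by (intro has_psum_integral_add has_psum_integral_scaleR)
  moreover have "(\<lambda>u v. c *\<^sub>R germ_lin y u v + d *\<^sub>R germ_lin z u v) = germ_lin (\<lambda>s. c *\<^sub>R y s + d *\<^sub>R z s)"
    unfolding germ_lin_def by (simp add: blinfun.add_right blinfun.scaleR_right)
  ultimately show ?thesis using psum_integral_eqI assms(3) unfolding lin_int_eq by metis
qed

lemma small_path_bounds:
  assumes y: "hoelder_path g T y" "hoelder_norm g T y \<le> 1" and st: "0 \<le> s" "s \<le> T" "0 \<le> t" "t \<le> T"
  shows "norm (y s) \<le> hoelder_norm g T y" "norm (x s + y t) \<le> R"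
proof -
  show "norm (y s) \<le> hoelder_norm g T y" using norm_le_hoelder_norm[OF y(1) T] st by simp
  have "norm (y t) \<le> 1" using norm_le_hoelder_norm[OF y(1) T, of t] y(2) st by simp
  then show "norm (x s + y t) \<le> R" using norm_triangle_ineq[of "x s" "y t"] R[of s] st by simp
qed

lemma germ_rem_bound:
  assumes y: "hoelder_path g T y" "hoelder_norm g T y \<le> 1" and st: "0 \<le> s" "s \<le> t" "t \<le> T"
  defines "N \<equiv> hoelder_norm g T y"
  shows "norm (germ_rem y s t) \<le> C * (N * N powr \<rho>) * (t - s) powr a"
proof -
  interpret G: hoelder_derivative "\<lambda>z. A t z - A s z" "\<lambda>z. DA t z - DA s z" "C * (t - s) powr a" R b
    using increment_hoelder_derivative st by simp
  have "germ_rem y s t = G.taylor_rem (x s) (y s)"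
    unfolding germ_rem_def germ_nl_def germ_lin_def G.taylor_rem_def by simp
  also have "norm \<dots> \<le> C * (t - s) powr a * norm (y s) powr b * norm (y s)"
    using G.norm_taylor_rem_le x_bounds(1)[of s t] small_path_bounds(2)[OF y, of s s] st by simp
  also have "\<dots> \<le> C * (t - s) powr a * N powr \<rho> * N"
  proof (intro mult_mono mult_left_mono)
    have "norm (y s) \<le> N" "N \<le> 1" using small_path_bounds(1)[OF y, of s s] st y(2) unfolding N_def by simp_all
    moreover have "norm (y s) powr b \<le> N powr b" using calculation b(1) by (intro powr_mono2) auto
    moreover have "N powr b \<le> N powr \<rho>"
      using calculation exponents(6) by (intro powr_mono') (auto intro: order_trans[OF norm_ge_zero])
    ultimately show "norm (y s) powr b \<le> N powr \<rho>" "norm (y s) \<le> N" by simp_all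
  qed (use C in simp_all)
  finally show ?thesis by (simp add: mult_ac)
qed

(* Only the Taylor remainder of A_{u,t} survives in the defect.  Moving its base point from x_u
   to x_s is estimated by interpolation, moving its increment from y_u to y_s by the
   Lipschitz bound. *)
lemma germ_rem_delta:
  assumes y: "hoelder_path g T y" "hoelder_norm g T y \<le> 1"
    and st: "0 \<le> s" "s \<le> u" "u \<le> t" "t \<le> T"
  defines "N \<equiv> hoelder_norm g T y"
  shows "norm (germ_rem y s t - germ_rem y s u - germ_rem y u t)
    \<le> C * (2 * X powr (b - \<rho>) + T powr (a + g - \<theta>)) * (N * N powr \<rho>) * (t - s) powr \<theta>"
proof -
  interpret G: hoelder_derivative "\<lambda>z. A t z - A u z" "\<lambda>z. DA t z - DA u z" "C * (t - u) powr a" R b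
    using increment_hoelder_derivative st by simp
  have N: "N \<ge> 0" "N \<le> 1" "norm (y s) \<le> N" "norm (y u) \<le> N" "norm (y s - y u) \<le> N * (u - s) powr g"
    unfolding N_def using hoelder_norm_nonneg[OF y(1) T] y(2) small_path_bounds(1)[OF y, of _ 0] st
      norm_diff_le_hoelder_norm[OF y(1) T, of s u] by (simp_all add: norm_minus_commute)
  have in_ball: "norm (x s) \<le> R" "norm (x u) \<le> R" "norm (x s + y s) \<le> R" "norm (x u + y s) \<le> R"
      "norm (x u + y u) \<le> R"
    using x_bounds(1) small_path_bounds(2)[OF y] st by simp_all
  let ?D1 = "G.taylor_rem (x s) (y s) - G.taylor_rem (x u) (y s)"
  let ?D2 = "G.taylor_rem (x u) (y s) - G.taylor_rem (x u) (y u)"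
  have eq: "germ_rem y s t - germ_rem y s u - germ_rem y u t = ?D1 + ?D2"
    unfolding germ_rem_def germ_nl_def germ_lin_def G.taylor_rem_def
    by (simp add: blinfun.diff_left blinfun.add_left algebra_simps)
  have "norm (germ_rem y s t - germ_rem y s u - germ_rem y u t) \<le> norm ?D1 + norm ?D2"
    unfolding eq by (rule norm_triangle_ineq)
  also have "norm ?D1 \<le> 2 * C * (N * N powr \<rho>) * (X powr (b - \<rho>) * (t - s) powr \<theta>)"
  proof -
    have "norm ?D1 \<le> 2 * (C * (t - u) powr a) * (norm (y s) * norm (y s) powr \<rho>) * norm (x s - x u) powr (b - \<rho>)"
      using G.norm_taylor_rem_diff_base_interpolated[OF in_ball(1,3,2,4)] exponents by simp
    also have "\<dots> \<le> 2 * (C * (t - u) powr a) * (N * N powr \<rho>) * norm (x s - x u) powr (b - \<rho>)"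
      using N C exponents a st by (intro mult_mono powr_mono2) auto
    also have "\<dots> = 2 * C * (N * N powr \<rho>) * ((t - u) powr a * norm (x s - x u) powr (b - \<rho>))"
      by (simp add: mult_ac)
    also have "\<dots> \<le> 2 * C * (N * N powr \<rho>) * (X powr (b - \<rho>) * (t - s) powr \<theta>)"
      using hoelder_product_le[OF st norm_ge_zero x_bounds(2)[of s u] X_nonneg a(1) g, of "b - \<rho>" \<theta>]
        exponents st T C N(1) by (intro mult_left_mono) simp_all
    finally show ?thesis .
  qed
  also have "norm ?D2 \<le> C * (N * N powr \<rho>) * (T powr (a + g - \<theta>) * (t - s) powr \<theta>)"
  proof -
    have "norm ?D2 \<le> C * N powr b * ((t - u) powr a * norm (y s - y u))"
      using G.norm_taylor_rem_diff_incr_le[OF in_ball(2,4,5) N(3,4)] by (simp add: mult_ac)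
    also have "\<dots> \<le> C * N powr \<rho> * (N * T powr (a + g - \<theta>) * (t - s) powr \<theta>)"
    proof (rule mult_mono)
      show "C * N powr b \<le> C * N powr \<rho>"
        using N(1,2) exponents C by (intro mult_left_mono powr_mono') auto
      show "(t - u) powr a * norm (y s - y u) \<le> N * T powr (a + g - \<theta>) * (t - s) powr \<theta>"
        using hoelder_product_le[OF st norm_ge_zero N(5) N(1) a(1) g, of 1 \<theta>] exponents N(1) by simp
    qed (use C in simp_all)
    finally show ?thesis by (simp add: mult_ac)
  qed
  finally show ?thesis by (simp add: algebra_simps)
qed

definition rem_const :: real where
  "rem_const = sewing_const T a \<theta> * C * (1 + 2 * X powr (b - \<rho>) + T powr (a + g - \<theta>))"

lemma remainder_sewing:
  assumes y: "hoelder_path g T y" "hoelder_norm g T y \<le> 1"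
  defines "N \<equiv> hoelder_norm g T y"
  shows "\<And>t. 0 \<le> t \<Longrightarrow> t \<le> T \<Longrightarrow> has_psum_integral (germ_rem y) t (psum_integral (germ_rem y) t)"
    "hoelder_norm a T (psum_integral (germ_rem y)) \<le> rem_const * (N * N powr \<rho>)"
proof -
  have "N * N powr \<rho> \<ge> 0" unfolding N_def using hoelder_norm_nonneg[OF y(1) T] by simp
  then have M: "C * (2 * X powr (b - \<rho>) + T powr (a + g - \<theta>)) * (N * N powr \<rho>) \<ge> 0"
    and B: "C * (N * N powr \<rho>) \<ge> 0"
    using C by simp_all
  note S = sewing[OF T exponents(1) M[unfolded N_def] B[unfolded N_def] less_imp_le[OF a(1)] exponents(2)
      germ_rem_bound[OF y] germ_rem_delta[OF y]]
  show "\<And>t. 0 \<le> t \<Longrightarrow> t \<le> T \<Longrightarrow> has_psum_integral (germ_rem y) t (psum_integral (germ_rem y) t)"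
    by (rule S(1))
  have "hoelder_norm a T (psum_integral (germ_rem y))
      \<le> sewing_const T a \<theta> * (C * (N * N powr \<rho>) + C * (2 * X powr (b - \<rho>) + T powr (a + g - \<theta>)) * (N * N powr \<rho>))"
    using S(3) unfolding N_def .
  then show "hoelder_norm a T (psum_integral (germ_rem y)) \<le> rem_const * (N * N powr \<rho>)"
    unfolding rem_const_def by (simp add: algebra_simps)
qed

lemma nl_int_add_eq:
  assumes y: "hoelder_path g T y" "hoelder_norm g T y \<le> 1" and t: "0 \<le> t" "t \<le> T"
  shows "nl_int A (\<lambda>s. x s + y s) t - nl_int A x t - lin_int DA x y t = psum_integral (germ_rem y) t"
proof -
  have "has_psum_integral (\<lambda>u v. germ_nl u v + germ_lin y u v + germ_rem y u v) t
      (nl_int A x t + lin_int DA x y t + psum_integral (germ_rem y) t)"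
    using nl_int_sewing(1)[OF t] lin_int_sewing(1)[OF y(1) t] remainder_sewing(1)[OF y t]
    by (intro has_psum_integral_add)
  moreover have "(\<lambda>u v. germ_nl u v + germ_lin y u v + germ_rem y u v)
      = (\<lambda>u v. A v (x u + y u) - A u (x u + y u))"
    unfolding germ_rem_def by simp
  ultimately have "nl_int A (\<lambda>s. x s + y s) t = nl_int A x t + lin_int DA x y t + psum_integral (germ_rem y) t"
    unfolding nl_int_def using psum_integral_eqI t(1) by simp
  then show ?thesis by (simp add: algebra_simps)
qed

lemma remainder_bound:
  assumes "hoelder_path g T y" "hoelder_norm g T y \<le> 1"
  shows "hoelder_norm a T (\<lambda>t. nl_int A (\<lambda>s. x s + y s) t - nl_int A x t - lin_int DA x y t)
    \<le> rem_const * (hoelder_norm g T y * hoelder_norm g T y powr \<rho>)"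
proof -
  have "hoelder_norm a T (\<lambda>t. nl_int A (\<lambda>s. x s + y s) t - nl_int A x t - lin_int DA x y t)
      = hoelder_norm a T (psum_integral (germ_rem y))"
    using nl_int_add_eq[OF assms] by (intro hoelder_norm_cong) simp
  then show ?thesis using remainder_sewing(2)[OF assms] by simp
qed

lemma rem_const_nonneg: "rem_const \<ge> 0"
  unfolding rem_const_def using sewing_const_nonneg[OF exponents(1)] C by simp

lemma Frechet_derivative:
  shows "(\<forall>t\<in>{0..T}. \<exists>I. has_psum_integral (\<lambda>u v. A v (x u) - A u (x u)) t I)
   \<and> hoelder_path a T (nl_int A x)
   \<and> (\<forall>y. hoelder_path g T y \<longrightarrow>
        (\<forall>t\<in>{0..T}. \<exists>I. has_psum_integral (\<lambda>u v. blinfun_apply (DA v (x u) - DA u (x u)) (y u)) t I))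
   \<and> (\<forall>y z c d. hoelder_path g T y \<and> hoelder_path g T z \<longrightarrow>
        (\<forall>t\<in>{0..T}. lin_int DA x (\<lambda>s. c *\<^sub>R y s + d *\<^sub>R z s) t
                     = c *\<^sub>R lin_int DA x y t + d *\<^sub>R lin_int DA x z t))
   \<and> (\<exists>C. \<forall>y. hoelder_path g T y \<longrightarrow>
        hoelder_path a T (lin_int DA x y) \<and>
        hoelder_norm a T (lin_int DA x y) \<le> C * hoelder_norm g T y)
   \<and> (\<forall>e>0. \<exists>d>0. \<forall>y. hoelder_path g T y \<and> hoelder_norm g T y < d \<longrightarrow>
        hoelder_norm a T (\<lambda>t. nl_int A (\<lambda>s. x s + y s) t - nl_int A x t - lin_int DA x y t)
          \<le> e * hoelder_norm g T y)"
proof (intro conjI)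
  show "\<forall>e>0. \<exists>d>0. \<forall>y. hoelder_path g T y \<and> hoelder_norm g T y < d \<longrightarrow>
      hoelder_norm a T (\<lambda>t. nl_int A (\<lambda>s. x s + y s) t - nl_int A x t - lin_int DA x y t)
        \<le> e * hoelder_norm g T y"
    using remainder_bound hoelder_norm_nonneg[OF _ T]
    by (intro little_o_of_superlinear_bound[OF exponents(5) rem_const_nonneg]) auto
qed (use nl_int_sewing lin_int_sewing lin_int_linear in \<open>(fastforce simp: germ_nl_def[abs_def] germ_lin_def[abs_def])+\<close>)

end

lemma field_along_path_exists:
  assumes "T > 0" "0 < a" "a < 1" "0 < b" "b < 1" "0 < g" "a + b * g > 1"
    "field_hoelder_loc T a b A DA" "hoelder_path g T x"
  obtains C where "field_along_path T a b g (hoelder_norm g T x + 1) C A DA x"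
proof -
  have "hoelder_norm g T x + 1 > 0" using hoelder_norm_nonneg[OF assms(9,1)] by simp
  then obtain C where "C \<ge> 0"
    "\<And>s t z. 0 \<le> s \<Longrightarrow> s \<le> t \<Longrightarrow> t \<le> T \<Longrightarrow> norm z \<le> hoelder_norm g T x + 1 \<Longrightarrow>
      norm (A t z - A s z) \<le> C * (t - s) powr a"
    "\<And>s t z. 0 \<le> s \<Longrightarrow> s \<le> t \<Longrightarrow> t \<le> T \<Longrightarrow> norm z \<le> hoelder_norm g T x + 1 \<Longrightarrow>
      norm (DA t z - DA s z) \<le> C * (t - s) powr a"
    "\<And>s t z z'. 0 \<le> s \<Longrightarrow> s \<le> t \<Longrightarrow> t \<le> T \<Longrightarrow> norm z \<le> hoelder_norm g T x + 1 \<Longrightarrow>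
      norm z' \<le> hoelder_norm g T x + 1 \<Longrightarrow>
      norm ((A t z - A s z) - (A t z' - A s z')) \<le> C * (t - s) powr a * norm (z - z') powr b"
    "\<And>s t z z'. 0 \<le> s \<Longrightarrow> s \<le> t \<Longrightarrow> t \<le> T \<Longrightarrow> norm z \<le> hoelder_norm g T x + 1 \<Longrightarrow>
      norm z' \<le> hoelder_norm g T x + 1 \<Longrightarrow>
      norm ((DA t z - DA s z) - (DA t z' - DA s z')) \<le> C * (t - s) powr a * norm (z - z') powr b"
    using field_hoelder_locE[OF assms(8) _ assms(1)] by blast
  moreover have "\<And>t z. 0 \<le> t \<Longrightarrow> t \<le> T \<Longrightarrow> (A t has_derivative blinfun_apply (DA t z)) (at z)"
    using assms(8) unfolding field_hoelder_loc_def by simp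
  moreover have "\<And>t. 0 \<le> t \<Longrightarrow> t \<le> T \<Longrightarrow> norm (x t) + 1 \<le> hoelder_norm g T x + 1"
    using norm_le_hoelder_norm[OF assms(9,1)] by simp
  ultimately have "field_along_path T a b g (hoelder_norm g T x + 1) C A DA x"
    using assms by unfold_locales auto
  then show thesis ..
qed

theorem mainTheorem17:
  fixes T a b g :: real
    and A :: "real \<Rightarrow> 'v::banach \<Rightarrow> 'w::banach"
    and DA :: "real \<Rightarrow> 'v \<Rightarrow> ('v \<Rightarrow>\<^sub>L 'w)"
  assumes "T > 0"
    and "separable_space (euclidean :: 'v topology)"
    and "separable_space (euclidean :: 'w topology)"
    and "0 < a" "a < 1" "0 < b" "b < 1" "0 < g" "g < 1"
    and "a + b * g > 1"
    and "field_hoelder_loc T a b A DA"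
  shows "\<forall>x. hoelder_path g T x \<longrightarrow>
     \<comment> \<open>F is well defined as a map C^g_t V -> C^a_t W\<close>
     (\<forall>t\<in>{0..T}. \<exists>I. has_psum_integral (\<lambda>u v. A v (x u) - A u (x u)) t I)
   \<and> hoelder_path a T (nl_int A x)
     \<comment> \<open>the candidate derivative is well defined, linear and bounded C^g_t V -> C^a_t W\<close>
   \<and> (\<forall>y. hoelder_path g T y \<longrightarrow>
        (\<forall>t\<in>{0..T}. \<exists>I. has_psum_integral (\<lambda>u v. blinfun_apply (DA v (x u) - DA u (x u)) (y u)) t I))
   \<and> (\<forall>y z c d. hoelder_path g T y \<and> hoelder_path g T z \<longrightarrow>
        (\<forall>t\<in>{0..T}. lin_int DA x (\<lambda>s. c *\<^sub>R y s + d *\<^sub>R z s) t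
                     = c *\<^sub>R lin_int DA x y t + d *\<^sub>R lin_int DA x z t))
   \<and> (\<exists>C. \<forall>y. hoelder_path g T y \<longrightarrow>
        hoelder_path a T (lin_int DA x y) \<and>
        hoelder_norm a T (lin_int DA x y) \<le> C * hoelder_norm g T y)
     \<comment> \<open>Frechet differentiability at x with DF(x) = lin_int DA x\<close>
   \<and> (\<forall>e>0. \<exists>d>0. \<forall>y. hoelder_path g T y \<and> hoelder_norm g T y < d \<longrightarrow>
        hoelder_norm a T (\<lambda>t. nl_int A (\<lambda>s. x s + y s) t - nl_int A x t - lin_int DA x y t)
          \<le> e * hoelder_norm g T y)"
  by (intro allI impI, erule field_along_path_exists[OF assms(1,4-8,10,11)],
      erule field_along_path.Frechet_derivative)

end
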